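(* Let $\mathcal{G}$ be a multi-player Markov game (as defined in the context) that admits a single controller $c \in [n]$ and satisfies the following condition: for every $T\in\mathbb{N}$ and every sequence of stationary product policies $(\pi^{(t)})_{1\le t\le T}$ there exists a stationary product policy $\pi^\star=(\pi^\star_1,\dots,\pi^\star_n)$ (which may depend on the sequence) such that $$\sum_{t=1}^T\sum_{i=1}^n V_i^{\pi^\star_i,\pi^{(t)}_{-i}}(\rho)-\sum_{t=1}^T\sum_{i=1}^n V_i^{\pi^{(t)}}(\rho)\ \ge\ 0 .$$ Run the rescaled optimistic gradient descent dynamics (defined in the context) with the operator $F_{\mathcal{G}}$ and the rescaling $A$ described in the context. Then for every $\epsilon>0$, with a suitable learning rate $\eta>0$, after $T = \frac{1}{\epsilon^2}\cdot \mathrm{poly}\big(n,\sum_{i=1}^n|\mathcal{A}_i|,|\mathcal{S}|,1/\zeta, C_{\mathcal{G}}, 1/\min_{s\in\mathcal{S}}\rho(s)\big)$ iterations, some iterate $x^{(t)}$, $t\in\{1,\dots,T\}$, is (the direct parameterization of) a stationary $\epsilon$-Nash equilibrium of $\mathcal{G}$.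
   Context: A multi-player Markov game $\mathcal{G}$ consists of: players $[n]=\{1,\dots,n\}$; a finite state space $\mathcal{S}$; finite nonempty action sets $\mathcal{A}_i$ with joint action set $\mathcal{A}=\prod_i\mathcal{A}_i$; transition probabilities $\mathbb{P}(s'\mid s,a)\ge 0$ with $\zeta:=\min_{(s,a)}(1-\sum_{s'}\mathbb{P}(s'\mid s,a))>0$ (the missing mass is the probability that the game terminates); rewards $R_i:\mathcal{S}\times\mathcal{A}\to[-1,1]$; an initial distribution $\rho\in\Delta(\mathcal{S})$ with full support. A stationary policy of player $i$ is $\pi_i:\mathcal{S}\to\Delta(\mathcal{A}_i)$, directly parameterized by $x_i\in\mathcal{X}_i:=\Delta(\mathcal{A}_i)^{\mathcal{S}}$ via $x_{i,s}[a_i]=\pi_i(a_i\mid s)$; $\mathcal{X}=\prod_i\mathcal{X}_i$. The value is $V_i^{\pi}(s)=\mathbb{E}_\pi[\sum_{h=0}^H R_i(s_h,a_h)\mid s_0=s]$, where $H$ is the last step before termination, and $V_i^\pi(\rho)=\mathbb{E}_{s\sim\rho}V_i^\pi(s)$. For a (possibly correlated) policy $\mu_{-i}$ of the others, $V_i^{\dagger,\mu_{-i}}(\rho)$ is the value of a best response of player $i$ (a stationary best response exists). A stationary product policy $\pi$ is an $\epsilon$-Nash equilibrium if $\max_i\{V_i^{\dagger,\pi_{-i}}(\rho)-V_i^{\pi}(\rho)\}\le\epsilon$. The game has a single controller $c$ if $\mathbb{P}(\cdot\mid s,a)$ depends on $a$ only through $a_c$. Unnormalized visitation: $\tilde d^{\pi}_\rho[s]=\mathbb{E}_{s_0\sim\rho}\sum_{h\ge0}\mathbb{P}^\pi(s_h=s\mid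 s_0)$; normalized $d^\pi_\rho=\tilde d^\pi_\rho/\sum_{s}\tilde d^\pi_\rho[s]$. With a single controller, $\tilde d^\pi_\rho$ depends only on $\pi_c$ and is written $\tilde d^{\pi_c}_\rho$. Operator: $F_{\mathcal{G}}(x)=-(\nabla_{x_1}V_1^{\pi}(\rho),\dots,\nabla_{x_n}V_n^{\pi}(\rho))$. Rescaling $A(x)$ (same shape as $x$): for $i\ne c$ all coordinates equal $1$; for $i=c$ the coordinate $(s,a_c)$ equals $1/\tilde d^{\pi_c}_\rho[s]$. Rescaled optimistic gradient descent with learning rate $\eta$: starting from arbitrary $x^{(0)}=\hat x^{(1)}\in\mathcal{X}$, for $t\ge1$, $x^{(t)}=\Pi_{\mathcal{X}}(\hat x^{(t)}-\eta A(x^{(t-1)})\circ F(x^{(t-1)}))$ and $\hat x^{(t+1)}=\Pi_{\mathcal{X}}(\hat x^{(t)}-\eta A(x^{(t)})\circ F(x^{(t)}))$, where $\Pi_{\mathcal{X}}$ is Euclidean projection and $\circ$ is the coordinatewise product. Distribution mismatch coefficient: $C_{\mathcal{G}}=\max_{i}\max_{\pi_{-i}}\min_{\pi^\star_i\in\Pi^\star_i(\pi_{-i})}\|d_\rho^{\pi^\star_i,\pi_{-i}}/\rho\|_\infty$, where $\Pi^\star_i(\pi_{-i})$ is the set of stationary best responses of $i$ to $\pi_{-i}$ and the ratio is coordinatewise. *)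

theory Defs
  imports "HOL-Analysis.Analysis"
begin

text \<open>Players are 0..<nplayers, states form a finite
  set, player i has action set acts i; a joint action is an element of
  PiE {..<n} acts. trans s a s' is the transition probability (substochastic; missing
  mass = termination), rew i s a the reward of player i, init the initial distribution.\<close>

record ('s, 'a) mgame =
  nplayers :: nat
  states   :: "'s set"
  acts     :: "nat \<Rightarrow> 'a set"
  trans    :: "'s \<Rightarrow> (nat \<Rightarrow> 'a) \<Rightarrow> 's \<Rightarrow> real"
  rew      :: "nat \<Rightarrow> 's \<Rightarrow> (nat \<Rightarrow> 'a) \<Rightarrow> real"
  init     :: "'s \<Rightarrow> real"

definition joint :: "('s, 'a) mgame \<Rightarrow> (nat \<Rightarrow> 'a) set" where
  "joint G = PiE {..<nplayers G} (acts G)"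

definition zeta :: "('s, 'a) mgame \<Rightarrow> real" where
  "zeta G = Min {1 - (\<Sum>s'\<in>states G. trans G s a s') | s a. s \<in> states G \<and> a \<in> joint G}"

definition wf_game :: "('s, 'a) mgame \<Rightarrow> bool" where
  "wf_game G \<longleftrightarrow>
     nplayers G \<ge> 1 \<and> finite (states G) \<and> states G \<noteq> {} \<and>
     (\<forall>i<nplayers G. finite (acts G i) \<and> acts G i \<noteq> {}) \<and>
     (\<forall>s\<in>states G. \<forall>a\<in>joint G. \<forall>s'\<in>states G. trans G s a s' \<ge> 0) \<and>
     zeta G > 0 \<and>
     (\<forall>i<nplayers G. \<forall>s\<in>states G. \<forall>a\<in>joint G. -1 \<le> rew G i s a \<and> rew G i s a \<le> 1) \<and>
     (\<forall>s\<in>states G. init G s > 0) \<and> (\<Sum>s\<in>states G. init G s) = 1"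

definition single_controller :: "('s, 'a) mgame \<Rightarrow> nat \<Rightarrow> bool" where
  "single_controller G c \<longleftrightarrow> c < nplayers G \<and>
     (\<forall>s\<in>states G. \<forall>a\<in>joint G. \<forall>b\<in>joint G. a c = b c \<longrightarrow>
        (\<forall>s'\<in>states G. trans G s a s' = trans G s b s'))"

text \<open>Direct parameterization: x i s a = pi_i(a | s). Coordinates outside the valid
  index set are fixed to 0.\<close>

type_synonym ('s, 'a) pol = "nat \<Rightarrow> 's \<Rightarrow> 'a \<Rightarrow> real"

definition pol_i :: "('s, 'a) mgame \<Rightarrow> nat \<Rightarrow> ('s \<Rightarrow> 'a \<Rightarrow> real) \<Rightarrow> bool" where
  "pol_i G i y \<longleftrightarrow>
     (\<forall>s\<in>states G. (\<forall>a\<in>acts G i. y s a \<ge> 0) \<and> (\<Sum>a\<in>acts G i. y s a) = 1) \<and>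
     (\<forall>s a. s \<notin> states G \<or> a \<notin> acts G i \<longrightarrow> y s a = 0)"

definition polX :: "('s, 'a) mgame \<Rightarrow> ('s, 'a) pol set" where
  "polX G = {x. (\<forall>i<nplayers G. pol_i G i (x i)) \<and> (\<forall>i\<ge>nplayers G. x i = (\<lambda>_ _. 0))}"

definition prob_joint :: "('s, 'a) mgame \<Rightarrow> ('s, 'a) pol \<Rightarrow> 's \<Rightarrow> (nat \<Rightarrow> 'a) \<Rightarrow> real" where
  "prob_joint G x s a = (\<Prod>j<nplayers G. x j s (a j))"

definition Ptrans :: "('s, 'a) mgame \<Rightarrow> ('s, 'a) pol \<Rightarrow> 's \<Rightarrow> 's \<Rightarrow> real" where
  "Ptrans G x s s' = (\<Sum>a\<in>joint G. prob_joint G x s a * trans G s a s')"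

definition rew_pol :: "('s, 'a) mgame \<Rightarrow> ('s, 'a) pol \<Rightarrow> nat \<Rightarrow> 's \<Rightarrow> real" where
  "rew_pol G x i s = (\<Sum>a\<in>joint G. prob_joint G x s a * rew G i s a)"

text \<open>mpow G x h s s' = probability that the game is still running at step h and is in
  state s', starting from s.\<close>

fun mpow :: "('s, 'a) mgame \<Rightarrow> ('s, 'a) pol \<Rightarrow> nat \<Rightarrow> 's \<Rightarrow> 's \<Rightarrow> real" where
  "mpow G x 0 s s' = (if s = s' then 1 else 0)"
| "mpow G x (Suc h) s s' = (\<Sum>s''\<in>states G. mpow G x h s s'' * Ptrans G x s'' s')"

definition Val :: "('s, 'a) mgame \<Rightarrow> ('s, 'a) pol \<Rightarrow> nat \<Rightarrow> 's \<Rightarrow> real" where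
  "Val G x i s = (\<Sum>h. \<Sum>s'\<in>states G. mpow G x h s s' * rew_pol G x i s')"

definition Vrho :: "('s, 'a) mgame \<Rightarrow> ('s, 'a) pol \<Rightarrow> nat \<Rightarrow> real" where
  "Vrho G x i = (\<Sum>s\<in>states G. init G s * Val G x i s)"

text \<open>Best-response value V_i^{dagger, pi_{-i}}(rho): a stationary best response exists.\<close>

definition BRval :: "('s, 'a) mgame \<Rightarrow> ('s, 'a) pol \<Rightarrow> nat \<Rightarrow> real" where
  "BRval G x i = Sup ((\<lambda>y. Vrho G (x(i := y)) i) ` {y. pol_i G i y})"

definition is_eps_NE :: "('s, 'a) mgame \<Rightarrow> real \<Rightarrow> ('s, 'a) pol \<Rightarrow> bool" where
  "is_eps_NE G \<epsilon> x \<longleftrightarrow> x \<in> polX G \<and> (\<forall>i<nplayers G. BRval G x i - Vrho G x i \<le> \<epsilon>)"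

definition dvis :: "('s, 'a) mgame \<Rightarrow> ('s, 'a) pol \<Rightarrow> 's \<Rightarrow> real" where
  "dvis G x s = (\<Sum>h. \<Sum>s0\<in>states G. init G s0 * mpow G x h s0 s)"

definition dnorm :: "('s, 'a) mgame \<Rightarrow> ('s, 'a) pol \<Rightarrow> 's \<Rightarrow> real" where
  "dnorm G x s = dvis G x s / (\<Sum>s'\<in>states G. dvis G x s')"

definition BRset :: "('s, 'a) mgame \<Rightarrow> ('s, 'a) pol \<Rightarrow> nat \<Rightarrow> ('s \<Rightarrow> 'a \<Rightarrow> real) set" where
  "BRset G x i = {y. pol_i G i y \<and> Vrho G (x(i := y)) i = BRval G x i}"

definition mismatch :: "('s, 'a) mgame \<Rightarrow> real" where
  "mismatch G = Sup {Inf {Max ((\<lambda>s. dnorm G (x(i := y)) s / init G s) ` states G) | y. y \<in> BRset G x i}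
                     | i x. i < nplayers G \<and> x \<in> polX G}"

text \<open>Operator F: minus the gradient of V_i(rho) w.r.t. player i's own coordinates
  (partial derivatives of the natural extension of V to all real coordinates).\<close>

definition grad :: "('s, 'a) mgame \<Rightarrow> ('s, 'a) pol \<Rightarrow> ('s, 'a) pol" where
  "grad G x = (\<lambda>i s a. deriv (\<lambda>t. Vrho G (x(i := (x i)(s := (x i s)(a := t)))) i) (x i s a))"

definition Fop :: "('s, 'a) mgame \<Rightarrow> ('s, 'a) pol \<Rightarrow> ('s, 'a) pol" where
  "Fop G x = (\<lambda>i s a. - grad G x i s a)"

definition Aresc :: "('s, 'a) mgame \<Rightarrow> nat \<Rightarrow> ('s, 'a) pol \<Rightarrow> ('s, 'a) pol" where
  "Aresc G c x = (\<lambda>i s a. if i = c then 1 / dvis G x s else 1)"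

definition sqdist :: "('s, 'a) mgame \<Rightarrow> ('s, 'a) pol \<Rightarrow> ('s, 'a) pol \<Rightarrow> real" where
  "sqdist G x y = (\<Sum>i<nplayers G. \<Sum>s\<in>states G. \<Sum>a\<in>acts G i. (x i s a - y i s a)\<^sup>2)"

definition proj :: "('s, 'a) mgame \<Rightarrow> ('s, 'a) pol \<Rightarrow> ('s, 'a) pol" where
  "proj G y = (THE x. x \<in> polX G \<and> (\<forall>x'\<in>polX G. sqdist G x y \<le> sqdist G x' y))"

definition step :: "('s, 'a) mgame \<Rightarrow> nat \<Rightarrow> real \<Rightarrow> ('s, 'a) pol \<Rightarrow> ('s, 'a) pol \<Rightarrow> ('s, 'a) pol" where
  "step G c \<eta> xh xp = proj G (\<lambda>i s a. xh i s a - \<eta> * (Aresc G c xp i s a * Fop G xp i s a))"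

text \<open>rogd G c eta x0 t = (x^(t), xhat^(t+1)), with x^(0) = xhat^(1) = x0.\<close>

fun rogd :: "('s, 'a) mgame \<Rightarrow> nat \<Rightarrow> real \<Rightarrow> ('s, 'a) pol \<Rightarrow> nat \<Rightarrow> ('s, 'a) pol \<times> ('s, 'a) pol" where
  "rogd G c \<eta> x0 0 = (x0, x0)"
| "rogd G c \<eta> x0 (Suc t) =
     (let xp = fst (rogd G c \<eta> x0 t); xh = snd (rogd G c \<eta> x0 t);
          xn = step G c \<eta> xh xp
      in (xn, step G c \<eta> xh xn))"

definition regret_condition :: "('s, 'a) mgame \<Rightarrow> bool" where
  "regret_condition G \<longleftrightarrow>
     (\<forall>(T::nat) (\<pi>::nat \<Rightarrow> ('s, 'a) pol). (\<forall>t\<in>{1..T}. \<pi> t \<in> polX G) \<longrightarrow>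
        (\<exists>\<pi>s\<in>polX G.
           (\<Sum>t=1..T. \<Sum>i<nplayers G. Vrho G ((\<pi> t)(i := \<pi>s i)) i)
         - (\<Sum>t=1..T. \<Sum>i<nplayers G. Vrho G (\<pi> t) i) \<ge> 0))"

definition game_size :: "('s, 'a) mgame \<Rightarrow> real" where
  "game_size G = real (nplayers G) + real (\<Sum>i<nplayers G. card (acts G i)) + real (card (states G))
     + 1 / zeta G + mismatch G + 1 / Min (init G ` states G)"

end

theory Submission
  imports Defs
begin

(* By the performance difference lemma the partial derivative of V_i in the
   coordinate (s, a) of player i is d^x(s) Q_i^x(s, a); after the rescaling A the controller's
   block of the update direction is Q_c^x and the others' blocks are d^x(s) Q_i^x.  Since only
   the controller moves the state, the total gain of the unilateral deviations to a product policy
   x' is the inner product of this direction with x' - x, weighted by d^{x'} on the controller's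
   blocks and by 1 elsewhere: the weights do not depend on x.  The regret hypothesis thus yields a
   Minty-type inequality in one fixed weighted norm, and the usual telescoping argument for
   optimistic gradient descent, with the Lipschitz bound of the rescaled gradient, bounds the total
   squared movement of the iterates by a polynomial in the game parameters.  Some iterate among the
   first T therefore moves by O(1/sqrt T), and the projection inequality then bounds every
   unilateral deviation gain at that iterate by O(1/sqrt T). *)

section \<open>Neumann series of row-contractive matrices\<close>

lemma sum_mult_delta_right:
  "finite S \<Longrightarrow> (\<Sum>u\<in>S. f u * (if u = a then c else 0)) = (if a \<in> S then f a * c else (0::real))"
  by (simp add: if_distrib[of "\<lambda>x. _ * x"] cong: if_cong)

lemma sum_delta_mult_left:
  "finite S \<Longrightarrow> (\<Sum>u\<in>S. (if a = u then c else 0) * f u) = (if a \<in> S then c * f a else (0::real))"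
  by (simp add: if_distrib[of "\<lambda>x. x * _"] cong: if_cong)

fun matpow :: "'s set \<Rightarrow> ('s \<Rightarrow> 's \<Rightarrow> real) \<Rightarrow> nat \<Rightarrow> 's \<Rightarrow> 's \<Rightarrow> real" where
  "matpow S M 0 s s' = (if s = s' then 1 else 0)"
| "matpow S M (Suc h) s s' = (\<Sum>s''\<in>S. matpow S M h s s'' * M s'' s')"

definition neumann :: "'s set \<Rightarrow> ('s \<Rightarrow> 's \<Rightarrow> real) \<Rightarrow> 's \<Rightarrow> 's \<Rightarrow> real" where
  "neumann S M s s' = (\<Sum>h. matpow S M h s s')"

lemma matpow_cong:
  "(\<And>u v. u \<in> S \<Longrightarrow> v \<in> S \<Longrightarrow> M u v = M' u v) \<Longrightarrow> s' \<in> S \<Longrightarrow> matpow S M h s s' = matpow S M' h s s'"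
  by (induction h arbitrary: s') auto

locale row_contraction =
  fixes S :: "'s set" and M :: "'s \<Rightarrow> 's \<Rightarrow> real" and g :: real
  assumes finite: "finite S" and nonneg: "0 \<le> g" and less_1: "g < 1"
    and row_abs_sum_le: "\<And>s. s \<in> S \<Longrightarrow> (\<Sum>s'\<in>S. \<bar>M s s'\<bar>) \<le> g"
begin

lemma matpow_Suc_left:
  "s \<in> S \<Longrightarrow> s' \<in> S \<Longrightarrow> matpow S M (Suc h) s s' = (\<Sum>u\<in>S. M s u * matpow S M h u s')"
proof (induction h arbitrary: s')
  case 0
  then show ?case using finite by (simp add: sum_mult_delta_right sum_delta_mult_left)
next
  case (Suc h)
  have "matpow S M (Suc (Suc h)) s s' = (\<Sum>s''\<in>S. (\<Sum>u\<in>S. M s u * matpow S M h u s'') * M s'' s')"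
    using Suc by simp
  also have "\<dots> = (\<Sum>u\<in>S. M s u * (\<Sum>s''\<in>S. matpow S M h u s'' * M s'' s'))"
    by (simp add: sum_distrib_right sum_distrib_left mult.assoc) (rule sum.swap)
  finally show ?case by simp
qed

lemma matpow_row_abs_sum_le: "s \<in> S \<Longrightarrow> (\<Sum>s'\<in>S. \<bar>matpow S M h s s'\<bar>) \<le> g ^ h"
proof (induction h)
  case 0
  then show ?case using finite by (simp add: if_distrib cong: if_cong)
next
  case (Suc h)
  have "(\<Sum>s'\<in>S. \<bar>matpow S M (Suc h) s s'\<bar>) \<le> (\<Sum>s'\<in>S. \<Sum>s''\<in>S. \<bar>matpow S M h s s''\<bar> * \<bar>M s'' s'\<bar>)"
    by (auto intro!: sum_mono order.trans[OF sum_abs] simp: abs_mult)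
  also have "\<dots> = (\<Sum>s''\<in>S. \<bar>matpow S M h s s''\<bar> * (\<Sum>s'\<in>S. \<bar>M s'' s'\<bar>))"
    by (simp add: sum_distrib_left) (rule sum.swap)
  also have "\<dots> \<le> (\<Sum>s''\<in>S. \<bar>matpow S M h s s''\<bar> * g)"
    by (intro sum_mono mult_left_mono row_abs_sum_le) auto
  also have "\<dots> \<le> g ^ h * g"
    using Suc nonneg by (simp add: sum_distrib_right[symmetric] mult_right_mono)
  finally show ?case by (simp add: mult.commute)
qed

lemma matpow_abs_le: "s \<in> S \<Longrightarrow> s' \<in> S \<Longrightarrow> \<bar>matpow S M h s s'\<bar> \<le> g ^ h"
  using matpow_row_abs_sum_le[of s h] member_le_sum[of s' S "\<lambda>s'. \<bar>matpow S M h s s'\<bar>"] finite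
  by force

lemma summable_matpow: "s \<in> S \<Longrightarrow> s' \<in> S \<Longrightarrow> summable (\<lambda>h. matpow S M h s s')"
  and summable_abs_matpow: "s \<in> S \<Longrightarrow> s' \<in> S \<Longrightarrow> summable (\<lambda>h. \<bar>matpow S M h s s'\<bar>)"
  by (rule summable_comparison_test[where g="\<lambda>h. g ^ h"];
      use matpow_abs_le nonneg less_1 in \<open>auto intro!: summable_geometric\<close>)+

lemma neumann_unfold_left:
  "s \<in> S \<Longrightarrow> s' \<in> S \<Longrightarrow> neumann S M s s' = (if s = s' then 1 else 0) + (\<Sum>u\<in>S. M s u * neumann S M u s')"
proof -
  assume s: "s \<in> S" and s': "s' \<in> S"
  have "neumann S M s s' = matpow S M 0 s s' + (\<Sum>h. matpow S M (Suc h) s s')"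
    unfolding neumann_def using suminf_split_head[OF summable_matpow[OF s s']] by simp
  also have "(\<Sum>h. matpow S M (Suc h) s s') = (\<Sum>h. \<Sum>u\<in>S. M s u * matpow S M h u s')"
    using matpow_Suc_left[OF s s'] by simp
  also have "\<dots> = (\<Sum>u\<in>S. \<Sum>h. M s u * matpow S M h u s')"
    by (rule suminf_sum) (intro summable_mult summable_matpow s')
  also have "\<dots> = (\<Sum>u\<in>S. M s u * neumann S M u s')"
    unfolding neumann_def by (intro sum.cong refl suminf_mult summable_matpow s')
  finally show ?thesis by simp
qed

lemma neumann_unfold_right:
  "s \<in> S \<Longrightarrow> s' \<in> S \<Longrightarrow> neumann S M s s' = (if s = s' then 1 else 0) + (\<Sum>u\<in>S. neumann S M s u * M u s')"
proof -
  assume s: "s \<in> S" and s': "s' \<in> S"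
  have "neumann S M s s' = matpow S M 0 s s' + (\<Sum>h. matpow S M (Suc h) s s')"
    unfolding neumann_def using suminf_split_head[OF summable_matpow[OF s s']] by simp
  also have "(\<Sum>h. matpow S M (Suc h) s s') = (\<Sum>u\<in>S. \<Sum>h. matpow S M h s u * M u s')"
    by simp (rule suminf_sum, intro summable_mult2 summable_matpow s)
  also have "\<dots> = (\<Sum>u\<in>S. neumann S M s u * M u s')"
    unfolding neumann_def by (intro sum.cong refl suminf_mult2[symmetric] summable_matpow s)
  finally show ?thesis by simp
qed

lemma neumann_row_abs_sum_le: "s \<in> S \<Longrightarrow> (\<Sum>s'\<in>S. \<bar>neumann S M s s'\<bar>) \<le> 1 / (1 - g)"
proof -
  assume s: "s \<in> S"
  have "(\<Sum>s'\<in>S. \<bar>neumann S M s s'\<bar>) \<le> (\<Sum>s'\<in>S. \<Sum>h. \<bar>matpow S M h s s'\<bar>)"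
    unfolding neumann_def by (intro sum_mono summable_rabs summable_abs_matpow s)
  also have "\<dots> = (\<Sum>h. \<Sum>s'\<in>S. \<bar>matpow S M h s s'\<bar>)"
    by (rule suminf_sum[symmetric]) (intro summable_abs_matpow s)
  also have "\<dots> \<le> (\<Sum>h. g ^ h)"
    by (intro suminf_le matpow_row_abs_sum_le s summable_sum summable_abs_matpow summable_geometric)
       (use nonneg less_1 in auto)
  also have "\<dots> = 1 / (1 - g)" using nonneg less_1 by (intro suminf_geometric) auto
  finally show ?thesis .
qed

lemma neumann_abs_le: "s \<in> S \<Longrightarrow> s' \<in> S \<Longrightarrow> \<bar>neumann S M s s'\<bar> \<le> 1 / (1 - g)"
  using neumann_row_abs_sum_le[of s] member_le_sum[of s' S "\<lambda>s'. \<bar>neumann S M s s'\<bar>"] finite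
  by force

context
  assumes M_nonneg: "\<And>s s'. s \<in> S \<Longrightarrow> s' \<in> S \<Longrightarrow> M s s' \<ge> 0"
begin

lemma matpow_nonneg: "s' \<in> S \<Longrightarrow> matpow S M h s s' \<ge> 0"
  by (induction h arbitrary: s') (auto intro!: sum_nonneg mult_nonneg_nonneg M_nonneg)

lemma neumann_nonneg: "s \<in> S \<Longrightarrow> s' \<in> S \<Longrightarrow> neumann S M s s' \<ge> 0"
  unfolding neumann_def by (intro suminf_nonneg summable_matpow matpow_nonneg)

lemma neumann_diag_ge_1: "s \<in> S \<Longrightarrow> neumann S M s s \<ge> 1"
  using neumann_unfold_left[of s s]
  by (auto intro!: sum_nonneg mult_nonneg_nonneg neumann_nonneg M_nonneg)

end

lemma neumann_apply_unfold:
  "s \<in> S \<Longrightarrow> (\<Sum>s'\<in>S. neumann S M s s' * r s') = r s + (\<Sum>u\<in>S. M s u * (\<Sum>v\<in>S. neumann S M u v * r v))"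
proof -
  assume s: "s \<in> S"
  have "(\<Sum>s'\<in>S. neumann S M s s' * r s') =
        (\<Sum>s'\<in>S. ((if s = s' then 1 else 0) + (\<Sum>u\<in>S. M s u * neumann S M u s')) * r s')"
    by (intro sum.cong refl) (simp add: neumann_unfold_left s)
  also have "\<dots> = (\<Sum>s'\<in>S. (if s = s' then 1 else 0) * r s') + (\<Sum>s'\<in>S. \<Sum>u\<in>S. M s u * neumann S M u s' * r s')"
    by (simp add: distrib_right sum.distrib sum_distrib_right)
  also have "(\<Sum>s'\<in>S. (if s = s' then 1 else 0) * r s') = r s"
    using s finite by (simp add: sum_delta_mult_left)
  also have "(\<Sum>s'\<in>S. \<Sum>u\<in>S. M s u * neumann S M u s' * r s') = (\<Sum>u\<in>S. M s u * (\<Sum>v\<in>S. neumann S M u v * r v))"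
    by (subst sum.swap) (simp add: sum_distrib_left mult.assoc)
  finally show ?thesis .
qed

lemma neumann_left_inverse:
  "s \<in> S \<Longrightarrow> (\<Sum>s'\<in>S. neumann S M s s' * (w s' - (\<Sum>u\<in>S. M s' u * w u))) = w s"
proof -
  assume s: "s \<in> S"
  have "(\<Sum>s'\<in>S. neumann S M s s' * (w s' - (\<Sum>u\<in>S. M s' u * w u))) =
        (\<Sum>u\<in>S. (neumann S M s u - (\<Sum>s'\<in>S. neumann S M s s' * M s' u)) * w u)"
    by (simp add: algebra_simps sum_subtractf sum_distrib_left sum_distrib_right)
       (subst sum.swap, simp add: mult.assoc)
  also have "\<dots> = (\<Sum>u\<in>S. (if s = u then 1 else 0) * w u)"
    by (intro sum.cong refl) (simp add: neumann_unfold_right s)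
  also have "\<dots> = w s" using s finite by (simp add: sum_delta_mult_left)
  finally show ?thesis .
qed

lemma weighted_neumann_unfold:
  "s \<in> S \<Longrightarrow> (\<Sum>s0\<in>S. \<rho> s0 * neumann S M s0 s) =
     \<rho> s + (\<Sum>s1\<in>S. (\<Sum>s0\<in>S. \<rho> s0 * neumann S M s0 s1) * M s1 s)"
proof -
  assume s: "s \<in> S"
  have "(\<Sum>s0\<in>S. \<rho> s0 * neumann S M s0 s) =
        (\<Sum>s0\<in>S. \<rho> s0 * ((if s0 = s then 1 else 0) + (\<Sum>u\<in>S. neumann S M s0 u * M u s)))"
    by (intro sum.cong refl) (simp add: neumann_unfold_right s)
  also have "\<dots> = (\<Sum>s0\<in>S. \<rho> s0 * (if s0 = s then 1 else 0)) + (\<Sum>s0\<in>S. \<Sum>u\<in>S. \<rho> s0 * neumann S M s0 u * M u s)"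
    by (simp add: algebra_simps sum.distrib sum_distrib_left)
  also have "(\<Sum>s0\<in>S. \<rho> s0 * (if s0 = s then 1 else 0)) = \<rho> s"
    using s finite by (simp add: sum_mult_delta_right)
  also have "(\<Sum>s0\<in>S. \<Sum>u\<in>S. \<rho> s0 * neumann S M s0 u * M u s) =
      (\<Sum>s1\<in>S. (\<Sum>s0\<in>S. \<rho> s0 * neumann S M s0 s1) * M s1 s)"
    by (subst sum.swap) (simp add: sum_distrib_right)
  finally show ?thesis .
qed

end

text \<open>The resolvent identity behind the performance difference lemma.\<close>

lemma neumann_apply_diff:
  assumes c1: "row_contraction S M1 g1" and c2: "row_contraction S M2 g2" and s: "s \<in> S"
  shows "(\<Sum>s'\<in>S. neumann S M2 s s' * r2 s') - (\<Sum>s'\<in>S. neumann S M1 s s' * r1 s') =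
    (\<Sum>s'\<in>S. neumann S M2 s s' *
       (r2 s' - r1 s' + (\<Sum>u\<in>S. (M2 s' u - M1 s' u) * (\<Sum>v\<in>S. neumann S M1 u v * r1 v))))"
proof -
  define V1 where "V1 s' = (\<Sum>v\<in>S. neumann S M1 s' v * r1 v)" for s'
  have w: "r2 s' - r1 s' + (\<Sum>u\<in>S. (M2 s' u - M1 s' u) * V1 u) = r2 s' - (V1 s' - (\<Sum>u\<in>S. M2 s' u * V1 u))"
    if "s' \<in> S" for s'
    using row_contraction.neumann_apply_unfold[OF c1 that, of r1] unfolding V1_def[symmetric]
    by (simp add: algebra_simps sum_subtractf)
  have "(\<Sum>s'\<in>S. neumann S M2 s s' * (r2 s' - r1 s' + (\<Sum>u\<in>S. (M2 s' u - M1 s' u) * V1 u))) =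
        (\<Sum>s'\<in>S. neumann S M2 s s' * r2 s') - (\<Sum>s'\<in>S. neumann S M2 s s' * (V1 s' - (\<Sum>u\<in>S. M2 s' u * V1 u)))"
    by (simp add: w right_diff_distrib sum_subtractf cong: sum.cong)
  also have "(\<Sum>s'\<in>S. neumann S M2 s s' * (V1 s' - (\<Sum>u\<in>S. M2 s' u * V1 u))) = V1 s"
    by (rule row_contraction.neumann_left_inverse[OF c2 s])
  finally show ?thesis unfolding V1_def by simp
qed

lemma weighted_neumann_diff:
  assumes c1: "row_contraction S M1 g1" and c2: "row_contraction S M2 g2" and s: "s \<in> S"
  shows "(\<Sum>s0\<in>S. \<rho> s0 * neumann S M2 s0 s) - (\<Sum>s0\<in>S. \<rho> s0 * neumann S M1 s0 s) =
    (\<Sum>s1\<in>S. (\<Sum>s0\<in>S. \<rho> s0 * neumann S M2 s0 s1) * (\<Sum>s2\<in>S. (M2 s1 s2 - M1 s1 s2) * neumann S M1 s2 s))"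
proof -
  define d2 where "d2 s1 = (\<Sum>s0\<in>S. \<rho> s0 * neumann S M2 s0 s1)" for s1
  have fin: "finite S" using c1 row_contraction.finite by blast
  have "(\<Sum>s1\<in>S. d2 s1 * (\<Sum>s2\<in>S. M2 s1 s2 * neumann S M1 s2 s)) =
        (\<Sum>s2\<in>S. (\<Sum>s1\<in>S. d2 s1 * M2 s1 s2) * neumann S M1 s2 s)"
    by (simp add: sum_distrib_left sum_distrib_right mult.assoc) (rule sum.swap)
  also have "\<dots> = (\<Sum>s2\<in>S. (d2 s2 - \<rho> s2) * neumann S M1 s2 s)"
    by (intro sum.cong refl) (use row_contraction.weighted_neumann_unfold[OF c2, of _ \<rho>] in \<open>simp add: d2_def\<close>)
  finally have M2_part: "(\<Sum>s1\<in>S. d2 s1 * (\<Sum>s2\<in>S. M2 s1 s2 * neumann S M1 s2 s)) =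
      (\<Sum>s2\<in>S. d2 s2 * neumann S M1 s2 s) - (\<Sum>s2\<in>S. \<rho> s2 * neumann S M1 s2 s)"
    by (simp add: left_diff_distrib sum_subtractf)
  have "(\<Sum>s1\<in>S. d2 s1 * (\<Sum>s2\<in>S. M1 s1 s2 * neumann S M1 s2 s)) =
        (\<Sum>s1\<in>S. d2 s1 * (neumann S M1 s1 s - (if s1 = s then 1 else 0)))"
    by (intro sum.cong refl) (use row_contraction.neumann_unfold_left[OF c1] s in auto)
  also have "\<dots> = (\<Sum>s1\<in>S. d2 s1 * neumann S M1 s1 s) - d2 s"
    using fin s by (simp add: right_diff_distrib sum_subtractf sum_mult_delta_right)
  finally have M1_part: "(\<Sum>s1\<in>S. d2 s1 * (\<Sum>s2\<in>S. M1 s1 s2 * neumann S M1 s2 s)) =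
      (\<Sum>s1\<in>S. d2 s1 * neumann S M1 s1 s) - d2 s" .
  have "(\<Sum>s1\<in>S. d2 s1 * (\<Sum>s2\<in>S. (M2 s1 s2 - M1 s1 s2) * neumann S M1 s2 s)) =
     (\<Sum>s1\<in>S. d2 s1 * (\<Sum>s2\<in>S. M2 s1 s2 * neumann S M1 s2 s)) -
     (\<Sum>s1\<in>S. d2 s1 * (\<Sum>s2\<in>S. M1 s1 s2 * neumann S M1 s2 s))"
    by (simp add: left_diff_distrib right_diff_distrib sum_subtractf)
  also have "\<dots> = d2 s - (\<Sum>s2\<in>S. \<rho> s2 * neumann S M1 s2 s)" unfolding M1_part M2_part by simp
  finally show ?thesis unfolding d2_def by simp
qed

locale wf_mgame =
  fixes G :: "('s, 'a) mgame"
  assumes wf: "wf_game G"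
begin

abbreviation "S \<equiv> states G"
abbreviation "n \<equiv> nplayers G"
abbreviation "A \<equiv> acts G"
abbreviation "J \<equiv> joint G"
abbreviation "\<rho> \<equiv> init G"
abbreviation "\<zeta> \<equiv> zeta G"
abbreviation "PT \<equiv> Ptrans G"
abbreviation "N x \<equiv> neumann (states G) (Ptrans G x)"

lemma finite_S: "finite S" and S_nonempty: "S \<noteq> {}" and n_ge_1: "n \<ge> 1"
  and finite_A: "i < n \<Longrightarrow> finite (A i)" and A_nonempty: "i < n \<Longrightarrow> A i \<noteq> {}"
  and trans_nonneg: "s \<in> S \<Longrightarrow> a \<in> J \<Longrightarrow> s' \<in> S \<Longrightarrow> trans G s a s' \<ge> 0"
  and zeta_pos: "\<zeta> > 0"
  and rew_abs_le: "i < n \<Longrightarrow> s \<in> S \<Longrightarrow> a \<in> J \<Longrightarrow> \<bar>rew G i s a\<bar> \<le> 1"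
  and rho_pos: "s \<in> S \<Longrightarrow> \<rho> s > 0" and sum_rho: "(\<Sum>s\<in>S. \<rho> s) = 1"
  using wf unfolding wf_game_def by (auto simp: abs_le_iff)

lemma finite_J: "finite J"
  unfolding joint_def by (intro finite_PiE) (auto simp: finite_A)

lemma J_nonempty: "J \<noteq> {}"
  unfolding joint_def using A_nonempty by (auto simp: PiE_eq_empty_iff)

lemma joint_memD: "a \<in> J \<Longrightarrow> j < n \<Longrightarrow> a j \<in> A j"
  unfolding joint_def by auto

lemma trans_row_sum_le: "s \<in> S \<Longrightarrow> a \<in> J \<Longrightarrow> (\<Sum>s'\<in>S. trans G s a s') \<le> 1 - \<zeta>"
proof -
  assume "s \<in> S" "a \<in> J"
  have "{1 - (\<Sum>s'\<in>S. trans G s a s') | s a. s \<in> S \<and> a \<in> J} = (\<lambda>(s,a). 1 - (\<Sum>s'\<in>S. trans G s a s')) ` (S \<times> J)"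
    by auto
  then have "\<zeta> \<le> 1 - (\<Sum>s'\<in>S. trans G s a s')"
    unfolding zeta_def using \<open>s \<in> S\<close> \<open>a \<in> J\<close> finite_S finite_J by (auto intro!: Min_le)
  then show ?thesis by simp
qed

lemma zeta_le_1: "\<zeta> \<le> 1"
proof -
  obtain s a where "s \<in> S" "a \<in> J" using S_nonempty J_nonempty by blast
  then show ?thesis using trans_row_sum_le[of s a] sum_nonneg[of S "trans G s a"] trans_nonneg by force
qed

lemma rho_le_1: "s \<in> S \<Longrightarrow> \<rho> s \<le> 1"
  using member_le_sum[of s S \<rho>] sum_rho rho_pos finite_S by (force simp: less_imp_le)

definition rho_min :: real where "rho_min = Min (\<rho> ` S)"

lemma rho_min_le: "s \<in> S \<Longrightarrow> rho_min \<le> \<rho> s"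
  unfolding rho_min_def using finite_S by simp

lemma rho_min_pos: "rho_min > 0"
  unfolding rho_min_def using finite_S S_nonempty rho_pos by (subst Min_gr_iff) auto

lemma rho_min_le_1: "rho_min \<le> 1"
  using S_nonempty rho_min_le rho_le_1 by (meson all_not_in_conv order_trans)

lemma polX_nonneg: "x \<in> polX G \<Longrightarrow> j < n \<Longrightarrow> s \<in> S \<Longrightarrow> b \<in> A j \<Longrightarrow> x j s b \<ge> 0"
  and polX_sum: "x \<in> polX G \<Longrightarrow> j < n \<Longrightarrow> s \<in> S \<Longrightarrow> (\<Sum>b\<in>A j. x j s b) = 1"
  and polX_outside: "x \<in> polX G \<Longrightarrow> j < n \<Longrightarrow> s \<notin> S \<or> b \<notin> A j \<Longrightarrow> x j s b = 0"
  unfolding polX_def pol_i_def by auto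

lemma polX_upd: "x \<in> polX G \<Longrightarrow> pol_i G i f \<Longrightarrow> i < n \<Longrightarrow> x(i := f) \<in> polX G"
  unfolding polX_def by auto

lemma polX_pol_i: "x \<in> polX G \<Longrightarrow> i < n \<Longrightarrow> pol_i G i (x i)"
  unfolding polX_def by auto

lemma sum_prob_joint: "(\<Sum>a\<in>J. prob_joint G x s a) = (\<Prod>j<n. \<Sum>b\<in>A j. x j s b)"
  unfolding joint_def prob_joint_def by (rule prod_sum_PiE[symmetric]) (auto simp: finite_A)

lemma sum_abs_prob_joint: "(\<Sum>a\<in>J. \<bar>prob_joint G x s a\<bar>) = (\<Prod>j<n. \<Sum>b\<in>A j. \<bar>x j s b\<bar>)"
  unfolding joint_def prob_joint_def abs_prod by (rule prod_sum_PiE[symmetric]) (auto simp: finite_A)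

lemma prob_joint_nonneg: "x \<in> polX G \<Longrightarrow> s \<in> S \<Longrightarrow> a \<in> J \<Longrightarrow> prob_joint G x s a \<ge> 0"
  unfolding prob_joint_def by (auto intro!: prod_nonneg polX_nonneg joint_memD)

lemma sum_prob_joint_eq_1: "x \<in> polX G \<Longrightarrow> s \<in> S \<Longrightarrow> (\<Sum>a\<in>J. prob_joint G x s a) = 1"
  unfolding sum_prob_joint by (auto simp: polX_sum)

lemma Ptrans_nonneg: "x \<in> polX G \<Longrightarrow> s \<in> S \<Longrightarrow> s' \<in> S \<Longrightarrow> PT x s s' \<ge> 0"
  unfolding Ptrans_def by (auto intro!: sum_nonneg mult_nonneg_nonneg prob_joint_nonneg trans_nonneg)

lemma Ptrans_row_abs_sum_le:
  "s \<in> S \<Longrightarrow> (\<Sum>s'\<in>S. \<bar>PT x s s'\<bar>) \<le> (1 - \<zeta>) * (\<Prod>j<n. \<Sum>b\<in>A j. \<bar>x j s b\<bar>)"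
proof -
  assume s: "s \<in> S"
  have "(\<Sum>s'\<in>S. \<bar>PT x s s'\<bar>) \<le> (\<Sum>s'\<in>S. \<Sum>a\<in>J. \<bar>prob_joint G x s a\<bar> * trans G s a s')"
    unfolding Ptrans_def
    by (intro sum_mono order.trans[OF sum_abs]) (auto simp: abs_mult s trans_nonneg intro!: sum_mono)
  also have "\<dots> = (\<Sum>a\<in>J. \<bar>prob_joint G x s a\<bar> * (\<Sum>s'\<in>S. trans G s a s'))"
    by (simp add: sum_distrib_left) (rule sum.swap)
  also have "\<dots> \<le> (\<Sum>a\<in>J. \<bar>prob_joint G x s a\<bar> * (1 - \<zeta>))"
    by (intro sum_mono mult_left_mono trans_row_sum_le s) auto
  also have "\<dots> = (1 - \<zeta>) * (\<Prod>j<n. \<Sum>b\<in>A j. \<bar>x j s b\<bar>)"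
    unfolding sum_abs_prob_joint[symmetric] by (simp add: sum_distrib_left[symmetric] mult.commute)
  finally show ?thesis .
qed

lemma row_contraction_Ptrans: "x \<in> polX G \<Longrightarrow> row_contraction S (PT x) (1 - \<zeta>)"
proof
  fix s assume x: "x \<in> polX G" and s: "s \<in> S"
  have "(\<Prod>j<n. \<Sum>b\<in>A j. \<bar>x j s b\<bar>) = 1"
    by (intro prod.neutral ballI) (auto simp: polX_sum[OF x _ s] polX_nonneg[OF x _ s])
  then show "(\<Sum>s'\<in>S. \<bar>PT x s s'\<bar>) \<le> 1 - \<zeta>" using Ptrans_row_abs_sum_le[OF s, of x] by simp
qed (use finite_S zeta_pos zeta_le_1 in auto)

lemma mpow_eq_matpow: "mpow G x h s s' = matpow S (PT x) h s s'"
  by (induction h arbitrary: s') auto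

lemma Val_eq_neumann:
  "row_contraction S (PT x) g \<Longrightarrow> s \<in> S \<Longrightarrow> Val G x i s = (\<Sum>s'\<in>S. N x s s' * rew_pol G x i s')"
proof -
  assume c: "row_contraction S (PT x) g" and s: "s \<in> S"
  have "Val G x i s = (\<Sum>s'\<in>S. \<Sum>h. matpow S (PT x) h s s' * rew_pol G x i s')"
    unfolding Val_def mpow_eq_matpow
    by (rule suminf_sum) (intro summable_mult2 row_contraction.summable_matpow[OF c] s, auto)
  also have "\<dots> = (\<Sum>s'\<in>S. N x s s' * rew_pol G x i s')"
    unfolding neumann_def
    by (intro sum.cong refl suminf_mult2[symmetric] row_contraction.summable_matpow[OF c] s) auto
  finally show ?thesis .
qed

lemma dvis_eq_neumann:
  "row_contraction S (PT x) g \<Longrightarrow> s \<in> S \<Longrightarrow> dvis G x s = (\<Sum>s0\<in>S. \<rho> s0 * N x s0 s)"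
proof -
  assume c: "row_contraction S (PT x) g" and s: "s \<in> S"
  have "dvis G x s = (\<Sum>s0\<in>S. \<Sum>h. \<rho> s0 * matpow S (PT x) h s0 s)"
    unfolding dvis_def mpow_eq_matpow
    by (rule suminf_sum) (intro summable_mult row_contraction.summable_matpow[OF c] s, auto)
  also have "\<dots> = (\<Sum>s0\<in>S. \<rho> s0 * N x s0 s)"
    unfolding neumann_def
    by (intro sum.cong refl suminf_mult row_contraction.summable_matpow[OF c] s) auto
  finally show ?thesis .
qed

lemma neumann_Ptrans_nonneg: "x \<in> polX G \<Longrightarrow> s \<in> S \<Longrightarrow> s' \<in> S \<Longrightarrow> N x s s' \<ge> 0"
  using row_contraction.neumann_nonneg[OF row_contraction_Ptrans] Ptrans_nonneg by blast

lemma rew_pol_abs_le: "x \<in> polX G \<Longrightarrow> i < n \<Longrightarrow> s \<in> S \<Longrightarrow> \<bar>rew_pol G x i s\<bar> \<le> 1"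
proof -
  assume x: "x \<in> polX G" and i: "i < n" and s: "s \<in> S"
  have "\<bar>rew_pol G x i s\<bar> \<le> (\<Sum>a\<in>J. prob_joint G x s a * 1)"
    unfolding rew_pol_def
    by (intro order.trans[OF sum_abs] sum_mono)
       (auto simp: abs_mult prob_joint_nonneg x s intro!: mult_left_le rew_abs_le i)
  then show ?thesis using sum_prob_joint_eq_1[OF x s] by simp
qed

lemma Val_abs_le: "x \<in> polX G \<Longrightarrow> i < n \<Longrightarrow> s \<in> S \<Longrightarrow> \<bar>Val G x i s\<bar> \<le> 1 / \<zeta>"
proof -
  assume x: "x \<in> polX G" and i: "i < n" and s: "s \<in> S"
  note c = row_contraction_Ptrans[OF x]
  have "\<bar>Val G x i s\<bar> \<le> (\<Sum>s'\<in>S. \<bar>N x s s'\<bar> * 1)"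
    unfolding Val_eq_neumann[OF c s]
    by (intro order.trans[OF sum_abs] sum_mono)
       (auto simp: abs_mult intro!: mult_left_le rew_pol_abs_le x i)
  also have "\<dots> \<le> 1 / (1 - (1 - \<zeta>))" using row_contraction.neumann_row_abs_sum_le[OF c s] by simp
  finally show ?thesis by simp
qed

lemma dvis_ge_rho: "x \<in> polX G \<Longrightarrow> s \<in> S \<Longrightarrow> dvis G x s \<ge> \<rho> s"
proof -
  assume x: "x \<in> polX G" and s: "s \<in> S"
  note c = row_contraction_Ptrans[OF x]
  have "\<rho> s \<le> \<rho> s * N x s s"
    using row_contraction.neumann_diag_ge_1[OF c, of s] Ptrans_nonneg[OF x] rho_pos[OF s] s by auto
  also have "\<dots> \<le> (\<Sum>s0\<in>S. \<rho> s0 * N x s0 s)"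
    by (rule member_le_sum[OF s])
       (use neumann_Ptrans_nonneg[OF x] rho_pos s finite_S in
        \<open>auto intro!: mult_nonneg_nonneg simp: less_imp_le\<close>)
  finally show ?thesis using dvis_eq_neumann[OF c s] by simp
qed

lemma dvis_pos: "x \<in> polX G \<Longrightarrow> s \<in> S \<Longrightarrow> dvis G x s > 0"
  using dvis_ge_rho rho_pos by (meson less_le_trans)

lemma dvis_nonneg: "x \<in> polX G \<Longrightarrow> s \<in> S \<Longrightarrow> dvis G x s \<ge> 0"
  using dvis_pos by (simp add: less_imp_le)

lemma sum_dvis_le: "x \<in> polX G \<Longrightarrow> (\<Sum>s\<in>S. dvis G x s) \<le> 1 / \<zeta>"
proof -
  assume x: "x \<in> polX G"
  note c = row_contraction_Ptrans[OF x]
  have "(\<Sum>s\<in>S. dvis G x s) = (\<Sum>s0\<in>S. \<rho> s0 * (\<Sum>s\<in>S. N x s0 s))"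
    using dvis_eq_neumann[OF c] by (simp add: sum_distrib_left) (rule sum.swap)
  also have "\<dots> \<le> (\<Sum>s0\<in>S. \<rho> s0 * (1 / \<zeta>))"
  proof (intro sum_mono mult_left_mono)
    fix s0 assume s0: "s0 \<in> S"
    have "(\<Sum>s\<in>S. N x s0 s) \<le> (\<Sum>s\<in>S. \<bar>N x s0 s\<bar>)" by (intro sum_mono) auto
    also have "\<dots> \<le> 1 / \<zeta>" using row_contraction.neumann_row_abs_sum_le[OF c s0] by simp
    finally show "(\<Sum>s\<in>S. N x s0 s) \<le> 1 / \<zeta>" .
    show "0 \<le> \<rho> s0" using rho_pos[OF s0] by simp
  qed
  also have "\<dots> = 1 / \<zeta>" using sum_rho by (simp add: sum_divide_distrib[symmetric])
  finally show ?thesis .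
qed

lemma dvis_le: "x \<in> polX G \<Longrightarrow> s \<in> S \<Longrightarrow> dvis G x s \<le> 1 / \<zeta>"
  using sum_dvis_le member_le_sum[of s S "dvis G x"] dvis_nonneg finite_S by force

end

section \<open>Performance difference\<close>

definition pure_pol :: "'a \<Rightarrow> 's \<Rightarrow> 'a \<Rightarrow> real" where
  "pure_pol b = (\<lambda>_ a. if a = b then 1 else 0)"

definition Qjoint :: "('s,'a) mgame \<Rightarrow> ('s,'a) pol \<Rightarrow> nat \<Rightarrow> 's \<Rightarrow> (nat \<Rightarrow> 'a) \<Rightarrow> real" where
  "Qjoint G x i s a' = rew G i s a' + (\<Sum>s'\<in>states G. trans G s a' s' * Val G x i s')"

definition Qact :: "('s,'a) mgame \<Rightarrow> ('s,'a) pol \<Rightarrow> nat \<Rightarrow> 's \<Rightarrow> 'a \<Rightarrow> real" where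
  "Qact G x i s b = (\<Sum>a'\<in>joint G. prob_joint G (x(i := pure_pol b)) s a' * Qjoint G x i s a')"

context wf_mgame begin

lemma prob_joint_upd:
  "i < n \<Longrightarrow> prob_joint G (x(i:=f)) s a = f s (a i) * (\<Prod>j\<in>{..<n}-{i}. x j s (a j))"
  unfolding prob_joint_def by (subst prod.remove[of _ i]) (auto intro!: prod.cong)

lemma prob_joint_upd_diff:
  assumes i: "i < n" and a: "a \<in> J"
  shows "prob_joint G (x(i:=f)) s a - prob_joint G x s a =
    (\<Sum>b\<in>A i. (f s b - x i s b) * prob_joint G (x(i:=pure_pol b)) s a)"
proof -
  have "(\<Sum>b\<in>A i. (f s b - x i s b) * prob_joint G (x(i:=pure_pol b)) s a) =
        (\<Sum>b\<in>A i. ((f s b - x i s b) * (\<Prod>j\<in>{..<n}-{i}. x j s (a j))) * (if b = a i then 1 else 0))"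
    by (intro sum.cong refl) (auto simp: prob_joint_upd[OF i] pure_pol_def)
  also have "\<dots> = (f s (a i) - x i s (a i)) * (\<Prod>j\<in>{..<n}-{i}. x j s (a j))"
    using joint_memD[OF a i] finite_A[OF i] by (simp add: sum_mult_delta_right)
  finally show ?thesis
    using prob_joint_upd[OF i, of x "x i"] by (simp add: prob_joint_upd[OF i] left_diff_distrib)
qed

lemma sum_prob_joint_upd_diff:
  "i < n \<Longrightarrow> (\<Sum>a\<in>J. (prob_joint G (x(i:=f)) s a - prob_joint G x s a) * F a) =
    (\<Sum>b\<in>A i. (f s b - x i s b) * (\<Sum>a\<in>J. prob_joint G (x(i:=pure_pol b)) s a * F a))"
  by (simp add: prob_joint_upd_diff sum_distrib_right sum_distrib_left mult.assoc cong: sum.cong)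
     (rule sum.swap)

lemma Bellman_gap_eq:
  "i < n \<Longrightarrow> rew_pol G (x(i:=f)) i s - rew_pol G x i s + (\<Sum>u\<in>S. (PT (x(i:=f)) s u - PT x s u) * Val G x i u)
     = (\<Sum>b\<in>A i. (f s b - x i s b) * Qact G x i s b)"
proof -
  assume i: "i < n"
  let ?y = "x(i:=f)"
  have "(\<Sum>u\<in>S. (PT ?y s u - PT x s u) * Val G x i u) =
        (\<Sum>u\<in>S. \<Sum>a\<in>J. (prob_joint G ?y s a - prob_joint G x s a) * trans G s a u * Val G x i u)"
    unfolding Ptrans_def
    by (intro sum.cong refl) (simp add: sum_subtractf[symmetric] left_diff_distrib sum_distrib_right)
  also have "\<dots> = (\<Sum>a\<in>J. (prob_joint G ?y s a - prob_joint G x s a) * (\<Sum>u\<in>S. trans G s a u * Val G x i u))"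
    by (subst sum.swap) (simp add: sum_distrib_left mult.assoc)
  finally have "rew_pol G ?y i s - rew_pol G x i s + (\<Sum>u\<in>S. (PT ?y s u - PT x s u) * Val G x i u)
     = (\<Sum>a\<in>J. (prob_joint G ?y s a - prob_joint G x s a) * Qjoint G x i s a)"
    unfolding rew_pol_def Qjoint_def
    by (simp add: distrib_left sum.distrib left_diff_distrib sum_subtractf algebra_simps)
  then show ?thesis unfolding sum_prob_joint_upd_diff[OF i] Qact_def by simp
qed

lemma performance_difference_state:
  assumes c1: "row_contraction S (PT x) g1" and c2: "row_contraction S (PT (x(i:=f))) g2"
    and i: "i < n" and s: "s \<in> S"
  shows "Val G (x(i:=f)) i s - Val G x i s =
    (\<Sum>s'\<in>S. N (x(i:=f)) s s' * (\<Sum>b\<in>A i. (f s' b - x i s' b) * Qact G x i s' b))"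
proof -
  have "Val G (x(i:=f)) i s - Val G x i s =
        (\<Sum>s'\<in>S. N (x(i:=f)) s s' * rew_pol G (x(i:=f)) i s') - (\<Sum>s'\<in>S. N x s s' * rew_pol G x i s')"
    using Val_eq_neumann[OF c1 s] Val_eq_neumann[OF c2 s] by simp
  also have "\<dots> = (\<Sum>s'\<in>S. N (x(i:=f)) s s' * (rew_pol G (x(i:=f)) i s' - rew_pol G x i s' +
                    (\<Sum>u\<in>S. (PT (x(i:=f)) s' u - PT x s' u) * (\<Sum>v\<in>S. N x u v * rew_pol G x i v))))"
    by (rule neumann_apply_diff[OF c1 c2 s])
  also have "\<dots> = (\<Sum>s'\<in>S. N (x(i:=f)) s s' * (\<Sum>b\<in>A i. (f s' b - x i s' b) * Qact G x i s' b))"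
    using Val_eq_neumann[OF c1] by (simp add: Bellman_gap_eq[OF i, symmetric] cong: sum.cong)
  finally show ?thesis .
qed

lemma performance_difference:
  assumes c1: "row_contraction S (PT x) g1" and c2: "row_contraction S (PT (x(i:=f))) g2" and i: "i < n"
  shows "Vrho G (x(i:=f)) i - Vrho G x i =
    (\<Sum>s'\<in>S. dvis G (x(i:=f)) s' * (\<Sum>b\<in>A i. (f s' b - x i s' b) * Qact G x i s' b))"
proof -
  have "Vrho G (x(i:=f)) i - Vrho G x i = (\<Sum>s\<in>S. \<rho> s * (Val G (x(i:=f)) i s - Val G x i s))"
    unfolding Vrho_def by (simp add: right_diff_distrib sum_subtractf)
  also have "\<dots> = (\<Sum>s\<in>S. \<Sum>s'\<in>S. \<rho> s * N (x(i:=f)) s s' * (\<Sum>b\<in>A i. (f s' b - x i s' b) * Qact G x i s' b))"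
    by (intro sum.cong refl) (simp add: performance_difference_state[OF c1 c2 i] sum_distrib_left mult.assoc)
  also have "\<dots> = (\<Sum>s'\<in>S. dvis G (x(i:=f)) s' * (\<Sum>b\<in>A i. (f s' b - x i s' b) * Qact G x i s' b))"
    by (subst sum.swap) (intro sum.cong refl, simp add: dvis_eq_neumann[OF c2] sum_distrib_right)
  finally show ?thesis .
qed

lemma performance_difference_polX:
  "x \<in> polX G \<Longrightarrow> pol_i G i f \<Longrightarrow> i < n \<Longrightarrow> Vrho G (x(i:=f)) i - Vrho G x i =
    (\<Sum>s'\<in>S. dvis G (x(i:=f)) s' * (\<Sum>b\<in>A i. (f s' b - x i s' b) * Qact G x i s' b))"
  by (rule performance_difference[OF row_contraction_Ptrans row_contraction_Ptrans[OF polX_upd]])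

end

definition coord_upd :: "('s,'a) pol \<Rightarrow> nat \<Rightarrow> 's \<Rightarrow> 'a \<Rightarrow> real \<Rightarrow> ('s,'a) pol" where
  "coord_upd x i s a t = x(i := (x i)(s := (x i s)(a := t)))"

context wf_mgame begin

lemma row_contraction_coord_upd:
  assumes x: "x \<in> polX G" and i: "i < n" and s: "s \<in> S" and a: "a \<in> A i"
    and t: "\<bar>t - x i s a\<bar> \<le> \<zeta>"
  shows "row_contraction S (PT (coord_upd x i s a t)) (1 - \<zeta>^2)"
proof
  fix s' assume s': "s' \<in> S"
  let ?x = "coord_upd x i s a t"
  have others: "(\<Prod>j\<in>{..<n}-{i}. \<Sum>b\<in>A j. \<bar>?x j s' b\<bar>) = 1"
    by (intro prod.neutral) (auto simp: coord_upd_def polX_sum[OF x _ s'] polX_nonneg[OF x _ s'])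
  have own: "(\<Sum>b\<in>A i. \<bar>?x i s' b\<bar>) \<le> 1 + \<zeta>"
  proof (cases "s' = s")
    case True
    have "(\<Sum>b\<in>A i - {a}. \<bar>?x i s' b\<bar>) = (\<Sum>b\<in>A i - {a}. \<bar>x i s b\<bar>)"
      using True by (intro sum.cong) (auto simp: coord_upd_def)
    then have "(\<Sum>b\<in>A i. \<bar>?x i s' b\<bar>) = \<bar>t\<bar> + (\<Sum>b\<in>A i. \<bar>x i s b\<bar>) - \<bar>x i s a\<bar>"
      using True finite_A[OF i] a by (simp add: sum.remove[of "A i" a] coord_upd_def)
    also have "\<dots> = \<bar>t\<bar> + 1 - x i s a"
      using polX_sum[OF x i s] polX_nonneg[OF x i s] a by simp
    finally show ?thesis using polX_nonneg[OF x i s a] t by linarith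
  next
    case False
    then show ?thesis
      using polX_sum[OF x i s'] polX_nonneg[OF x i s'] zeta_pos by (simp add: coord_upd_def)
  qed
  have "(\<Prod>j<n. \<Sum>b\<in>A j. \<bar>?x j s' b\<bar>) = (\<Sum>b\<in>A i. \<bar>?x i s' b\<bar>)"
    using i others by (subst prod.remove[of _ i]) auto
  have "(\<Sum>s''\<in>S. \<bar>PT ?x s' s''\<bar>) \<le> (1 - \<zeta>) * (\<Prod>j<n. \<Sum>b\<in>A j. \<bar>?x j s' b\<bar>)"
    using Ptrans_row_abs_sum_le[OF s', of ?x] by simp
  also have "\<dots> \<le> (1 - \<zeta>) * (1 + \<zeta>)"
    using own zeta_le_1 \<open>(\<Prod>j<n. \<Sum>b\<in>A j. \<bar>?x j s' b\<bar>) = (\<Sum>b\<in>A i. \<bar>?x i s' b\<bar>)\<close>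
    by (intro mult_left_mono) auto
  finally show "(\<Sum>s''\<in>S. \<bar>PT ?x s' s''\<bar>) \<le> 1 - \<zeta>^2"
    by (simp add: algebra_simps power2_eq_square)
qed (use finite_S zeta_pos zeta_le_1 in \<open>auto simp: power_le_one\<close>)

lemma sum_coord_upd_diff:
  assumes i: "i < n" and a: "a \<in> A i"
  shows "(\<Sum>b\<in>A i. (coord_upd x i s a t i s' b - x i s' b) * H b) =
    (if s' = s then (t - x i s a) * H a else 0)"
proof -
  have "(\<Sum>b\<in>A i. (coord_upd x i s a t i s' b - x i s' b) * H b) =
        (\<Sum>b\<in>A i. (if s' = s then (t - x i s a) * H b else 0) * (if b = a then 1 else 0))"
    by (intro sum.cong refl) (auto simp: coord_upd_def)
  also have "\<dots> = (if s' = s then (t - x i s a) * H a else 0)"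
    using finite_A[OF i] a by (simp add: sum_mult_delta_right)
  finally show ?thesis .
qed

lemma Ptrans_coord_upd_diff:
  assumes i: "i < n" and a: "a \<in> A i"
  shows "PT (coord_upd x i s a t) s1 s2 - PT x s1 s2 =
    (if s1 = s then (t - x i s a) * PT (x(i := pure_pol a)) s s2 else 0)"
proof -
  have "PT (coord_upd x i s a t) s1 s2 - PT x s1 s2 =
    (\<Sum>a'\<in>J. (prob_joint G (coord_upd x i s a t) s1 a' - prob_joint G x s1 a') * trans G s1 a' s2)"
    unfolding Ptrans_def by (simp add: sum_subtractf left_diff_distrib)
  also have "\<dots> = (\<Sum>b\<in>A i. (coord_upd x i s a t i s1 b - x i s1 b) * PT (x(i := pure_pol b)) s1 s2)"
    unfolding coord_upd_def Ptrans_def by (simp add: sum_prob_joint_upd_diff[OF i])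
  also have "\<dots> = (if s1 = s then (t - x i s a) * PT (x(i := pure_pol a)) s1 s2 else 0)"
    by (rule sum_coord_upd_diff[OF i a])
  finally show ?thesis by simp
qed

context
  fixes x i s a t
  assumes x: "x \<in> polX G" and i: "i < n" and s: "s \<in> S" and a: "a \<in> A i"
    and t: "\<bar>t - x i s a\<bar> \<le> \<zeta>"
begin

lemma Vrho_coord_upd_diff:
  "Vrho G (coord_upd x i s a t) i - Vrho G x i =
     dvis G (coord_upd x i s a t) s * ((t - x i s a) * Qact G x i s a)"
proof -
  have "coord_upd x i s a t = x(i := coord_upd x i s a t i)" by (simp add: coord_upd_def)
  then have "Vrho G (coord_upd x i s a t) i - Vrho G x i = (\<Sum>s'\<in>S. dvis G (coord_upd x i s a t) s' *
      (\<Sum>b\<in>A i. (coord_upd x i s a t i s' b - x i s' b) * Qact G x i s' b))"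
    using performance_difference[OF row_contraction_Ptrans[OF x] _ i, of "coord_upd x i s a t i"]
      row_contraction_coord_upd[OF x i s a t] by metis
  also have "\<dots> = dvis G (coord_upd x i s a t) s * ((t - x i s a) * Qact G x i s a)"
    using finite_S s by (simp add: sum_coord_upd_diff[OF i a] sum_mult_delta_right cong: if_cong)
  finally show ?thesis .
qed

lemma dvis_coord_upd_diff:
  "dvis G (coord_upd x i s a t) s - dvis G x s =
     dvis G (coord_upd x i s a t) s * ((t - x i s a) * (\<Sum>s2\<in>S. PT (x(i := pure_pol a)) s s2 * N x s2 s))"
proof -
  let ?x = "coord_upd x i s a t"
  note c0 = row_contraction_Ptrans[OF x] and c = row_contraction_coord_upd[OF x i s a t]
  have "dvis G ?x s - dvis G x s =
    (\<Sum>s1\<in>S. dvis G ?x s1 * (\<Sum>s2\<in>S. (PT ?x s1 s2 - PT x s1 s2) * N x s2 s))"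
    unfolding dvis_eq_neumann[OF c s] dvis_eq_neumann[OF c0 s]
    by (subst weighted_neumann_diff[OF c0 c s]) (simp add: dvis_eq_neumann[OF c])
  also have "\<dots> = (\<Sum>s1\<in>S. dvis G ?x s1 *
      (if s1 = s then (t - x i s a) * (\<Sum>s2\<in>S. PT (x(i := pure_pol a)) s s2 * N x s2 s) else 0))"
    by (intro sum.cong refl, cases "s1 = s")
       (simp_all add: Ptrans_coord_upd_diff[OF i a] sum_distrib_left mult.assoc)
  also have "\<dots> = dvis G ?x s * ((t - x i s a) * (\<Sum>s2\<in>S. PT (x(i := pure_pol a)) s s2 * N x s2 s))"
    using finite_S s by (simp add: sum_mult_delta_right)
  finally show ?thesis .
qed

end

text \<open>Moving a single coordinate is a rank-one change of the transition matrix, so near \<open>x\<close>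
  both the visitation and the value are explicit rational functions of the coordinate.\<close>

lemma grad_eq:
  assumes x: "x \<in> polX G" and i: "i < n" and s: "s \<in> S" and a: "a \<in> A i"
  shows "grad G x i s a = dvis G x s * Qact G x i s a"
proof -
  define t0 where "t0 = x i s a"
  define \<gamma> where "\<gamma> = (\<Sum>s2\<in>S. PT (x(i := pure_pol a)) s s2 * N x s2 s)"
  define Q where "Q = Qact G x i s a"
  define d0 where "d0 = dvis G x s"
  define \<delta> where "\<delta> = min \<zeta> (1 / (2 * (\<bar>\<gamma>\<bar> + 1)))"
  have "\<delta> > 0" using zeta_pos by (simp add: \<delta>_def)
  have near: "Vrho G (coord_upd x i s a t) i = Vrho G x i + (t - t0) * (Q * d0) / (1 - (t - t0) * \<gamma>)"
    if t: "\<bar>t - t0\<bar> < \<delta>" for t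
  proof -
    have tz: "\<bar>t - x i s a\<bar> \<le> \<zeta>" using t by (simp add: \<delta>_def t0_def)
    have "\<bar>(t - t0) * \<gamma>\<bar> \<le> \<bar>t - t0\<bar> * (\<bar>\<gamma>\<bar> + 1)" by (simp add: abs_mult mult_left_mono)
    also have "\<dots> < 1 / (2 * (\<bar>\<gamma>\<bar> + 1)) * (\<bar>\<gamma>\<bar> + 1)"
      using t by (intro mult_strict_right_mono) (auto simp: \<delta>_def)
    also have "\<dots> = 1 / 2" by (simp add: field_simps)
    finally have "1 - (t - t0) * \<gamma> > 0" by linarith
    then have "dvis G (coord_upd x i s a t) s = d0 / (1 - (t - t0) * \<gamma>)"
      using dvis_coord_upd_diff[OF x i s a tz] by (simp add: field_simps d0_def t0_def \<gamma>_def)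
    then show ?thesis
      using Vrho_coord_upd_diff[OF x i s a tz] by (simp add: field_simps Q_def t0_def)
  qed
  have ev: "eventually (\<lambda>t. Vrho G (coord_upd x i s a t) i =
      Vrho G x i + (t - t0) * (Q * d0) / (1 - (t - t0) * \<gamma>)) (nhds t0)"
    unfolding eventually_nhds_metric using \<open>\<delta> > 0\<close> near by (auto simp: dist_real_def)
  have der: "((\<lambda>t. Vrho G x i + (t - t0) * (Q * d0) / (1 - (t - t0) * \<gamma>))
      has_field_derivative (Q * d0)) (at t0)"
    by (auto intro!: derivative_eq_intros)
  have "((\<lambda>t. Vrho G (coord_upd x i s a t) i) has_field_derivative (Q * d0)) (at t0)"
    using DERIV_cong_ev[OF refl ev refl] der by simp
  then show ?thesis
    unfolding grad_def coord_upd_def[symmetric] t0_def Q_def d0_def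
    by (simp add: DERIV_imp_deriv mult.commute)
qed

end

section \<open>Euclidean projection onto the policy polytope\<close>

lemma simplex_threshold_exists:
  assumes B: "finite B" "B \<noteq> {}"
  shows "\<exists>\<tau>. (\<Sum>a\<in>B. max (y a - \<tau>) 0) = (1::real)"
proof -
  define f where "f \<tau> = (\<Sum>a\<in>B. max (y a - \<tau>) 0)" for \<tau>
  define m where "m = Min (y ` B)"
  define M where "M = Max (y ` B)"
  have m_le: "m \<le> y a" and le_M: "y a \<le> M" if "a \<in> B" for a
    using that B by (auto simp: m_def M_def)
  obtain a0 where a0: "a0 \<in> B" using B by blast
  have "f M = 0" unfolding f_def by (intro sum.neutral) (auto dest: le_M)
  moreover have "1 \<le> f (m - 1)"
  proof -
    have "1 \<le> max (y a0 - (m - 1)) 0" using m_le[OF a0] by simp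
    also have "\<dots> \<le> f (m - 1)" unfolding f_def by (rule member_le_sum[OF a0]) (use B in auto)
    finally show ?thesis .
  qed
  moreover have "m - 1 \<le> M" using m_le[OF a0] le_M[OF a0] by simp
  moreover have "continuous_on {m - 1 .. M} f" unfolding f_def by (intro continuous_intros)
  ultimately obtain \<tau> where "f \<tau> = 1" using IVT2'[of f M 1 "m - 1"] by auto
  then show ?thesis unfolding f_def by blast
qed

definition simplex_threshold :: "'a set \<Rightarrow> ('a \<Rightarrow> real) \<Rightarrow> real" where
  "simplex_threshold B y = (SOME \<tau>. (\<Sum>a\<in>B. max (y a - \<tau>) 0) = 1)"

definition simplex_proj :: "'a set \<Rightarrow> ('a \<Rightarrow> real) \<Rightarrow> 'a \<Rightarrow> real" where
  "simplex_proj B y a = max (y a - simplex_threshold B y) 0"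

lemma sum_simplex_proj: "finite B \<Longrightarrow> B \<noteq> {} \<Longrightarrow> (\<Sum>a\<in>B. simplex_proj B y a) = 1"
  unfolding simplex_proj_def simplex_threshold_def by (rule someI_ex[OF simplex_threshold_exists])

lemma simplex_proj_nonneg: "simplex_proj B y a \<ge> 0"
  unfolding simplex_proj_def by simp

lemma simplex_proj_variational_ineq:
  assumes B: "finite B" "B \<noteq> {}" and z: "\<forall>a\<in>B. z a \<ge> 0" "(\<Sum>a\<in>B. z a) = 1"
  shows "(\<Sum>a\<in>B. (y a - simplex_proj B y a) * (z a - simplex_proj B y a)) \<le> 0"
proof -
  let ?t = "simplex_threshold B y" and ?p = "simplex_proj B y"
  have "(y a - ?p a) * (z a - ?p a) \<le> ?t * (z a - ?p a)" if a: "a \<in> B" for a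
    using z(1) a by (cases "y a - ?t \<ge> 0") (auto simp: simplex_proj_def mult_right_mono)
  then have "(\<Sum>a\<in>B. (y a - ?p a) * (z a - ?p a)) \<le> (\<Sum>a\<in>B. ?t * (z a - ?p a))"
    by (intro sum_mono)
  also have "\<dots> = ?t * ((\<Sum>a\<in>B. z a) - (\<Sum>a\<in>B. ?p a))"
    by (simp add: sum_distrib_left sum_subtractf right_diff_distrib)
  also have "\<dots> = 0" using z sum_simplex_proj[OF B] by simp
  finally show ?thesis .
qed

lemma simplex_proj_cong:
  assumes "\<And>a. a \<in> B \<Longrightarrow> y a = y' a" and "a \<in> B"
  shows "simplex_proj B y a = simplex_proj B y' a"
proof -
  have "simplex_threshold B y = simplex_threshold B y'"
    unfolding simplex_threshold_def using assms(1) by (simp cong: sum.cong)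
  then show ?thesis unfolding simplex_proj_def using assms by simp
qed

context wf_mgame begin

definition polX_proj :: "('s,'a) pol \<Rightarrow> ('s,'a) pol" where
  "polX_proj y = (\<lambda>i s a. if i < n \<and> s \<in> S \<and> a \<in> A i then simplex_proj (A i) (y i s) a else 0)"

lemma polX_proj_in_polX: "polX_proj y \<in> polX G"
proof -
  have "(\<Sum>a\<in>A i. polX_proj y i s a) = 1" if "i < n" "s \<in> S" for i s
    using sum_simplex_proj[OF finite_A A_nonempty, OF that(1)] that by (simp add: polX_proj_def)
  then show ?thesis
    unfolding polX_def pol_i_def by (auto simp: polX_proj_def simplex_proj_nonneg)
qed

lemma sqdist_nonneg: "sqdist G x y \<ge> 0"
  unfolding sqdist_def by (intro sum_nonneg) auto

lemma block_sqdist_le: "i < n \<Longrightarrow> s \<in> S \<Longrightarrow> (\<Sum>a\<in>A i. (x i s a - y i s a)^2) \<le> sqdist G x y"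
  unfolding sqdist_def
  by (rule order.trans[OF member_le_sum[where f="\<lambda>s. \<Sum>a\<in>A i. (x i s a - y i s a)^2"]
        member_le_sum[where f="\<lambda>i. \<Sum>s\<in>S. \<Sum>a\<in>A i. (x i s a - y i s a)^2"]])
     (auto intro!: sum_nonneg simp: finite_S)

lemma sqdist_eq_0_coord:
  assumes "sqdist G x y \<le> 0" and i: "i < n" and "s \<in> S" and a: "a \<in> A i"
  shows "x i s a = y i s a"
proof -
  have "(x i s a - y i s a)^2 \<le> (\<Sum>a\<in>A i. (x i s a - y i s a)^2)"
    by (rule member_le_sum[OF a]) (auto simp: finite_A[OF i])
  also have "\<dots> \<le> 0" using block_sqdist_le[OF i \<open>s \<in> S\<close>, of x y] assms(1) by linarith
  finally show ?thesis by simp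
qed

lemma polX_eqI:
  assumes "x \<in> polX G" "y \<in> polX G"
    and "\<And>i s a. i < n \<Longrightarrow> s \<in> S \<Longrightarrow> a \<in> A i \<Longrightarrow> x i s a = y i s a"
  shows "x = y"
proof (intro ext)
  fix i s a
  show "x i s a = y i s a"
    using assms polX_outside[OF assms(1)] polX_outside[OF assms(2)] unfolding polX_def
  proof (cases "i < n")
    case True
    then show ?thesis using assms(3)[OF True] polX_outside[OF assms(1) True] polX_outside[OF assms(2) True]
      by metis
  qed (use assms(1,2) in \<open>auto simp: polX_def\<close>)
qed

lemma polX_proj_variational_ineq:
  "z \<in> polX G \<Longrightarrow> (\<Sum>i<n. \<Sum>s\<in>S. \<Sum>a\<in>A i. (y i s a - polX_proj y i s a) * (z i s a - polX_proj y i s a)) \<le> 0"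
proof -
  assume z: "z \<in> polX G"
  have block: "(\<Sum>a\<in>A i. (y i s a - polX_proj y i s a) * (z i s a - polX_proj y i s a)) \<le> 0"
    if "i < n" "s \<in> S" for i s
    using simplex_proj_variational_ineq[OF finite_A A_nonempty, of i "z i s" "y i s"] that
      polX_nonneg[OF z] polX_sum[OF z]
    by (simp add: polX_proj_def cong: sum.cong)
  then have "(\<Sum>s\<in>S. \<Sum>a\<in>A i. (y i s a - polX_proj y i s a) * (z i s a - polX_proj y i s a)) \<le> 0"
    if "i < n" for i
    using that by (meson sum_nonpos)
  then show ?thesis by (meson lessThan_iff sum_nonpos)
qed

lemma sqdist_polX_proj_ge:
  assumes z: "z \<in> polX G"
  shows "sqdist G z y \<ge> sqdist G (polX_proj y) y + sqdist G z (polX_proj y)"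
proof -
  let ?p = "polX_proj y"
  have "sqdist G z y = (\<Sum>i<n. \<Sum>s\<in>S. \<Sum>a\<in>A i. (?p i s a - y i s a)^2 + (z i s a - ?p i s a)^2
                         - 2 * ((y i s a - ?p i s a) * (z i s a - ?p i s a)))"
    unfolding sqdist_def by (intro sum.cong refl) (simp add: power2_eq_square algebra_simps)
  also have "\<dots> = sqdist G ?p y + sqdist G z ?p -
      2 * (\<Sum>i<n. \<Sum>s\<in>S. \<Sum>a\<in>A i. (y i s a - ?p i s a) * (z i s a - ?p i s a))"
    unfolding sqdist_def by (simp only: sum.distrib sum_subtractf sum_distrib_left)
  finally show ?thesis using polX_proj_variational_ineq[OF z, of y] by simp
qed

lemma proj_eq_polX_proj: "proj G y = polX_proj y"
  unfolding proj_def
proof (rule the1_equality)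
  have min: "\<forall>z\<in>polX G. sqdist G (polX_proj y) y \<le> sqdist G z y"
    using sqdist_polX_proj_ge sqdist_nonneg by (smt (verit))
  then show "polX_proj y \<in> polX G \<and> (\<forall>z\<in>polX G. sqdist G (polX_proj y) y \<le> sqdist G z y)"
    using polX_proj_in_polX by blast
  show "\<exists>!x. x \<in> polX G \<and> (\<forall>z\<in>polX G. sqdist G x y \<le> sqdist G z y)"
  proof (rule ex1I[of _ "polX_proj y"])
    fix q assume q: "q \<in> polX G \<and> (\<forall>z\<in>polX G. sqdist G q y \<le> sqdist G z y)"
    then have "sqdist G q y \<le> sqdist G (polX_proj y) y" using polX_proj_in_polX by blast
    then have "sqdist G q (polX_proj y) \<le> 0" using sqdist_polX_proj_ge[of q y] q by linarith
    then show "q = polX_proj y"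
      using q polX_proj_in_polX by (intro polX_eqI) (auto dest: sqdist_eq_0_coord)
  qed (use polX_proj_in_polX min in blast)
qed

lemma proj_in_polX: "proj G y \<in> polX G"
  using proj_eq_polX_proj polX_proj_in_polX by simp

lemma proj_cong:
  "(\<And>i s a. i < n \<Longrightarrow> s \<in> S \<Longrightarrow> a \<in> A i \<Longrightarrow> y i s a = y' i s a) \<Longrightarrow> proj G y = proj G y'"
  unfolding proj_eq_polX_proj polX_proj_def by (intro ext) (auto intro!: simplex_proj_cong)

lemma proj_variational_ineq:
  assumes i: "i < n" and s: "s \<in> S" and z: "\<forall>a\<in>A i. z a \<ge> 0" "(\<Sum>a\<in>A i. z a) = 1"
  shows "(\<Sum>a\<in>A i. (y i s a - proj G y i s a) * (z a - proj G y i s a)) \<le> 0"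
  using simplex_proj_variational_ineq[OF finite_A[OF i] A_nonempty[OF i] z, of "y i s"] i s
  by (simp add: proj_eq_polX_proj polX_proj_def)

end

section \<open>Lipschitz bounds for the rescaled gradient\<close>

lemma abs_sum_mult_le: "(\<And>k. k \<in> I \<Longrightarrow> \<bar>g k\<bar> \<le> B) \<Longrightarrow> \<bar>\<Sum>k\<in>I. f k * g k\<bar> \<le> (\<Sum>k\<in>I. \<bar>f k\<bar>) * (B::real)"
proof -
  assume h: "\<And>k. k \<in> I \<Longrightarrow> \<bar>g k\<bar> \<le> B"
  have "\<bar>\<Sum>k\<in>I. f k * g k\<bar> \<le> (\<Sum>k\<in>I. \<bar>f k\<bar> * B)"
    by (intro order.trans[OF sum_abs] sum_mono) (simp only: abs_mult, rule mult_left_mono[OF h], auto)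
  then show ?thesis by (simp add: sum_distrib_right)
qed

lemma abs_sum_nonneg_mult_le:
  "(\<And>k. k \<in> I \<Longrightarrow> f k \<ge> 0) \<Longrightarrow> (\<And>k. k \<in> I \<Longrightarrow> \<bar>g k\<bar> \<le> B) \<Longrightarrow>
    \<bar>\<Sum>k\<in>I. f k * g k\<bar> \<le> (\<Sum>k\<in>I. f k) * (B::real)"
proof -
  assume f: "\<And>k. k \<in> I \<Longrightarrow> f k \<ge> 0" and h: "\<And>k. k \<in> I \<Longrightarrow> \<bar>g k\<bar> \<le> B"
  have "(\<Sum>k\<in>I. \<bar>f k\<bar>) = (\<Sum>k\<in>I. f k)" using f by (intro sum.cong) auto
  then show ?thesis using abs_sum_mult_le[of I g B f, OF h] by simp
qed

lemma prod_diff_telescope: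
  fixes p q :: "nat \<Rightarrow> 'a::comm_ring_1"
  shows "(\<Prod>j<n. p j) - (\<Prod>j<n. q j) =
    (\<Sum>k<n. \<Prod>j<n. if j < k then q j else if j = k then p j - q j else p j)"
proof -
  define H where "H k = (\<Prod>j<n. if j < k then q j else p j)" for k
  have "H k - H (Suc k) = (\<Prod>j<n. if j < k then q j else if j = k then p j - q j else p j)"
    if k: "k < n" for k
  proof -
    have "(\<Prod>j\<in>{..<n}-{k}. if j < Suc k then q j else p j) = (\<Prod>j\<in>{..<n}-{k}. if j < k then q j else p j)"
      "(\<Prod>j\<in>{..<n}-{k}. if j < k then q j else if j = k then p j - q j else p j) =
       (\<Prod>j\<in>{..<n}-{k}. if j < k then q j else p j)"
      by (intro prod.cong refl; auto)+
    then show ?thesis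
      unfolding H_def using k by (simp add: prod.remove[of "{..<n}" k] algebra_simps)
  qed
  moreover have "H 0 = (\<Prod>j<n. p j)" "H n = (\<Prod>j<n. q j)"
    unfolding H_def by (auto intro: prod.cong)
  ultimately show ?thesis using sum_lessThan_telescope'[of H n] by simp
qed

definition resc_grad :: "('s,'a) mgame \<Rightarrow> nat \<Rightarrow> ('s,'a) pol \<Rightarrow> ('s,'a) pol" where
  "resc_grad G c x i s a = (if i = c then Qact G x c s a else dvis G x s * Qact G x i s a)"

context wf_mgame begin

lemma prob_joint_l1_diff_le:
  assumes px: "\<And>j b. j < n \<Longrightarrow> b \<in> A j \<Longrightarrow> x j s b \<ge> 0" and py: "\<And>j b. j < n \<Longrightarrow> b \<in> A j \<Longrightarrow> y j s b \<ge> 0"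
    and sx: "\<And>j. j < n \<Longrightarrow> (\<Sum>b\<in>A j. x j s b) = 1" and sy: "\<And>j. j < n \<Longrightarrow> (\<Sum>b\<in>A j. y j s b) = 1"
  shows "(\<Sum>a\<in>J. \<bar>prob_joint G x s a - prob_joint G y s a\<bar>) \<le> (\<Sum>j<n. \<Sum>b\<in>A j. \<bar>x j s b - y j s b\<bar>)"
proof -
  define w where "w k j b = (if j < k then y j s b else if j = k then x j s b - y j s b else x j s b)" for k j b
  have hybrid: "(\<Sum>a\<in>J. \<bar>\<Prod>j<n. w k j (a j)\<bar>) = (\<Sum>b\<in>A k. \<bar>x k s b - y k s b\<bar>)" if k: "k < n" for k
  proof -
    have others: "(\<Sum>b\<in>A j. \<bar>w k j b\<bar>) = 1" if j: "j \<in> {..<n}-{k}" for j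
    proof (cases "j < k")
      case True
      then have "(\<Sum>b\<in>A j. \<bar>w k j b\<bar>) = (\<Sum>b\<in>A j. y j s b)" using j py by (intro sum.cong) (auto simp: w_def)
      then show ?thesis using sy j by simp
    next
      case False
      then have "(\<Sum>b\<in>A j. \<bar>w k j b\<bar>) = (\<Sum>b\<in>A j. x j s b)" using j px by (intro sum.cong) (auto simp: w_def)
      then show ?thesis using sx j by simp
    qed
    have "(\<Sum>a\<in>J. \<bar>\<Prod>j<n. w k j (a j)\<bar>) = (\<Prod>j<n. \<Sum>b\<in>A j. \<bar>w k j b\<bar>)"
      unfolding joint_def abs_prod by (rule prod_sum_PiE[symmetric]) (auto simp: finite_A)
    also have "\<dots> = (\<Sum>b\<in>A k. \<bar>w k k b\<bar>)"
      using k others by (simp add: prod.remove[of "{..<n}" k])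
    finally show ?thesis by (simp add: w_def)
  qed
  have "(\<Sum>a\<in>J. \<bar>prob_joint G x s a - prob_joint G y s a\<bar>) \<le> (\<Sum>a\<in>J. \<Sum>k<n. \<bar>\<Prod>j<n. w k j (a j)\<bar>)"
    unfolding prob_joint_def prod_diff_telescope w_def by (intro sum_mono sum_abs)
  also have "\<dots> = (\<Sum>k<n. \<Sum>a\<in>J. \<bar>\<Prod>j<n. w k j (a j)\<bar>)" by (rule sum.swap)
  also have "\<dots> = (\<Sum>j<n. \<Sum>b\<in>A j. \<bar>x j s b - y j s b\<bar>)" by (intro sum.cong refl) (simp add: hybrid)
  finally show ?thesis .
qed

definition l1_dist_at :: "('s,'a) pol \<Rightarrow> ('s,'a) pol \<Rightarrow> 's \<Rightarrow> real" where
  "l1_dist_at x y s = (\<Sum>j<n. \<Sum>b\<in>A j. \<bar>x j s b - y j s b\<bar>)"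

definition l1_dist :: "('s,'a) pol \<Rightarrow> ('s,'a) pol \<Rightarrow> real" where
  "l1_dist x y = (\<Sum>s\<in>S. l1_dist_at x y s)"

lemma l1_dist_at_nonneg: "l1_dist_at x y s \<ge> 0" unfolding l1_dist_at_def by (intro sum_nonneg) auto

lemma l1_dist_at_le: "s \<in> S \<Longrightarrow> l1_dist_at x y s \<le> l1_dist x y"
  unfolding l1_dist_def by (rule member_le_sum) (auto simp: l1_dist_at_nonneg finite_S)

lemma l1_dist_nonneg: "l1_dist x y \<ge> 0" unfolding l1_dist_def by (intro sum_nonneg l1_dist_at_nonneg)

lemma sum_pure_pol: "b \<in> A i \<Longrightarrow> i < n \<Longrightarrow> (\<Sum>b'\<in>A i. pure_pol b s b') = 1"
  unfolding pure_pol_def using finite_A by (simp add: sum.delta')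

lemma prob_joint_diff_le: "x \<in> polX G \<Longrightarrow> y \<in> polX G \<Longrightarrow> s \<in> S \<Longrightarrow>
  (\<Sum>a\<in>J. \<bar>prob_joint G x s a - prob_joint G y s a\<bar>) \<le> l1_dist_at x y s"
  unfolding l1_dist_at_def by (rule prob_joint_l1_diff_le) (auto simp: polX_nonneg polX_sum)

lemma prob_joint_pure_diff_le: "x \<in> polX G \<Longrightarrow> y \<in> polX G \<Longrightarrow> s \<in> S \<Longrightarrow> i < n \<Longrightarrow> b \<in> A i \<Longrightarrow>
  (\<Sum>a\<in>J. \<bar>prob_joint G (x(i:=pure_pol b)) s a - prob_joint G (y(i:=pure_pol b)) s a\<bar>) \<le> l1_dist_at x y s"
proof -
  assume x: "x \<in> polX G" and y: "y \<in> polX G" and s: "s \<in> S" and i: "i < n" and b: "b \<in> A i"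
  have "(\<Sum>a\<in>J. \<bar>prob_joint G (x(i:=pure_pol b)) s a - prob_joint G (y(i:=pure_pol b)) s a\<bar>) \<le>
     (\<Sum>j<n. \<Sum>b'\<in>A j. \<bar>(x(i:=pure_pol b)) j s b' - (y(i:=pure_pol b)) j s b'\<bar>)"
    by (rule prob_joint_l1_diff_le)
       (auto simp: polX_nonneg[OF x] polX_nonneg[OF y] polX_sum[OF x] polX_sum[OF y] s sum_pure_pol[OF b i]
         pure_pol_def sum.delta' finite_A b)
  also have "\<dots> \<le> l1_dist_at x y s" unfolding l1_dist_at_def by (intro sum_mono) auto
  finally show ?thesis .
qed

lemma prob_joint_pure_nonneg: "x \<in> polX G \<Longrightarrow> s \<in> S \<Longrightarrow> a \<in> J \<Longrightarrow> prob_joint G (x(i:=pure_pol b)) s a \<ge> 0"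
  unfolding prob_joint_def
proof (intro prod_nonneg ballI)
  fix j assume "x \<in> polX G" "s \<in> S" "a \<in> J" "j \<in> {..<n}"
  then show "0 \<le> (x(i := pure_pol b)) j s (a j)"
    by (cases "j = i") (auto simp: pure_pol_def intro!: polX_nonneg joint_memD)
qed

lemma sum_prob_joint_pure:
  "x \<in> polX G \<Longrightarrow> s \<in> S \<Longrightarrow> i < n \<Longrightarrow> b \<in> A i \<Longrightarrow> (\<Sum>a\<in>J. prob_joint G (x(i:=pure_pol b)) s a) = 1"
  unfolding sum_prob_joint by (intro prod.neutral) (auto simp: polX_sum sum_pure_pol)

lemma rew_pol_diff_le: "x \<in> polX G \<Longrightarrow> y \<in> polX G \<Longrightarrow> s \<in> S \<Longrightarrow> i < n \<Longrightarrow>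
  \<bar>rew_pol G x i s - rew_pol G y i s\<bar> \<le> l1_dist_at x y s"
proof -
  assume x: "x \<in> polX G" and y: "y \<in> polX G" and s: "s \<in> S" and i: "i < n"
  have "\<bar>rew_pol G x i s - rew_pol G y i s\<bar> \<le> (\<Sum>a\<in>J. \<bar>prob_joint G x s a - prob_joint G y s a\<bar>) * 1"
    unfolding rew_pol_def sum_subtractf[symmetric] left_diff_distrib[symmetric]
    by (rule abs_sum_mult_le) (rule rew_abs_le[OF i s])
  then show ?thesis using prob_joint_diff_le[OF x y s] by simp
qed

lemma Ptrans_diff_le: "x \<in> polX G \<Longrightarrow> y \<in> polX G \<Longrightarrow> s \<in> S \<Longrightarrow>
  (\<Sum>u\<in>S. \<bar>PT x s u - PT y s u\<bar>) \<le> l1_dist_at x y s"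
proof -
  assume x: "x \<in> polX G" and y: "y \<in> polX G" and s: "s \<in> S"
  have "(\<Sum>u\<in>S. \<bar>PT x s u - PT y s u\<bar>) \<le> (\<Sum>u\<in>S. \<Sum>a\<in>J. \<bar>prob_joint G x s a - prob_joint G y s a\<bar> * trans G s a u)"
    unfolding Ptrans_def sum_subtractf[symmetric]
    by (intro sum_mono order.trans[OF sum_abs])
       (auto simp: left_diff_distrib[symmetric] abs_mult trans_nonneg s intro!: sum_mono)
  also have "\<dots> = (\<Sum>a\<in>J. \<bar>prob_joint G x s a - prob_joint G y s a\<bar> * (\<Sum>u\<in>S. trans G s a u))"
    by (subst sum.swap) (simp add: sum_distrib_left)
  also have "\<dots> \<le> (\<Sum>a\<in>J. \<bar>prob_joint G x s a - prob_joint G y s a\<bar> * 1)"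
    using trans_row_sum_le[OF s] zeta_pos by (intro sum_mono mult_left_mono) force+
  finally show ?thesis using prob_joint_diff_le[OF x y s] by simp
qed

lemma Val_diff_le: "x \<in> polX G \<Longrightarrow> y \<in> polX G \<Longrightarrow> s \<in> S \<Longrightarrow> i < n \<Longrightarrow>
  \<bar>Val G x i s - Val G y i s\<bar> \<le> 2 * l1_dist x y / \<zeta>^2"
proof -
  assume x: "x \<in> polX G" and y: "y \<in> polX G" and s: "s \<in> S" and i: "i < n"
  note cx = row_contraction_Ptrans[OF x] and cy = row_contraction_Ptrans[OF y]
  define w where
    "w s' = rew_pol G x i s' - rew_pol G y i s' + (\<Sum>u\<in>S. (PT x s' u - PT y s' u) * Val G y i u)" for s'
  have "Val G x i s - Val G y i s = (\<Sum>s'\<in>S. N x s s' * rew_pol G x i s') - (\<Sum>s'\<in>S. N y s s' * rew_pol G y i s')"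
    using Val_eq_neumann[OF cx s] Val_eq_neumann[OF cy s] by simp
  also have "\<dots> = (\<Sum>s'\<in>S. N x s s' * (rew_pol G x i s' - rew_pol G y i s' +
      (\<Sum>u\<in>S. (PT x s' u - PT y s' u) * (\<Sum>v\<in>S. N y u v * rew_pol G y i v))))"
    by (rule neumann_apply_diff[OF cy cx s])
  also have "\<dots> = (\<Sum>s'\<in>S. N x s s' * w s')"
    unfolding w_def using Val_eq_neumann[OF cy]
    by (intro sum.cong refl arg_cong2[where f="(*)"] arg_cong2[where f="(+)"]) auto
  finally have eq: "Val G x i s - Val G y i s = (\<Sum>s'\<in>S. N x s s' * w s')" .
  have wb: "\<bar>w s'\<bar> \<le> 2 * l1_dist x y / \<zeta>" if s': "s' \<in> S" for s'
  proof -
    have "\<bar>\<Sum>u\<in>S. (PT x s' u - PT y s' u) * Val G y i u\<bar> \<le> (\<Sum>u\<in>S. \<bar>PT x s' u - PT y s' u\<bar>) * (1 / \<zeta>)"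
      by (rule abs_sum_mult_le) (rule Val_abs_le[OF y i])
    also have "\<dots> \<le> l1_dist_at x y s' * (1 / \<zeta>)"
      using Ptrans_diff_le[OF x y s'] zeta_pos by (intro mult_right_mono) auto
    finally have "\<bar>w s'\<bar> \<le> l1_dist_at x y s' + l1_dist_at x y s' * (1 / \<zeta>)"
      using rew_pol_diff_le[OF x y s' i] unfolding w_def by linarith
    also have "\<dots> \<le> l1_dist x y / \<zeta> + l1_dist x y / \<zeta>"
    proof -
      have a1: "l1_dist_at x y s' \<le> l1_dist_at x y s' / \<zeta>"
        using zeta_pos zeta_le_1 l1_dist_at_nonneg[of x y s'] by (simp add: le_divide_eq mult_left_le)
      have a2: "l1_dist_at x y s' / \<zeta> \<le> l1_dist x y / \<zeta>"
        using l1_dist_at_le[OF s', of x y] zeta_pos by (simp add: divide_right_mono)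
      show ?thesis using a1 a2 by simp
    qed
    finally show ?thesis by simp
  qed
  have "\<bar>Val G x i s - Val G y i s\<bar> \<le> (\<Sum>s'\<in>S. \<bar>N x s s'\<bar>) * (2 * l1_dist x y / \<zeta>)"
    unfolding eq by (rule abs_sum_mult_le) (rule wb)
  also have "\<dots> \<le> (1 / \<zeta>) * (2 * l1_dist x y / \<zeta>)"
    using row_contraction.neumann_row_abs_sum_le[OF cx s] l1_dist_nonneg[of x y] zeta_pos
    by (intro mult_right_mono) auto
  finally show ?thesis by (simp add: power2_eq_square)
qed

lemma Qjoint_diff_le: "x \<in> polX G \<Longrightarrow> y \<in> polX G \<Longrightarrow> s \<in> S \<Longrightarrow> i < n \<Longrightarrow> a \<in> J \<Longrightarrow>
  \<bar>Qjoint G x i s a - Qjoint G y i s a\<bar> \<le> 2 * l1_dist x y / \<zeta>^2"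
proof -
  assume x: "x \<in> polX G" and y: "y \<in> polX G" and s: "s \<in> S" and i: "i < n" and a: "a \<in> J"
  have "\<bar>Qjoint G x i s a - Qjoint G y i s a\<bar> = \<bar>\<Sum>s'\<in>S. trans G s a s' * (Val G x i s' - Val G y i s')\<bar>"
    unfolding Qjoint_def by (simp add: sum_subtractf[symmetric] right_diff_distrib)
  also have "\<dots> \<le> (\<Sum>s'\<in>S. trans G s a s') * (2 * l1_dist x y / \<zeta>^2)"
    by (rule abs_sum_nonneg_mult_le) (auto intro: trans_nonneg[OF s a] Val_diff_le[OF x y _ i])
  also have "\<dots> \<le> 1 * (2 * l1_dist x y / \<zeta>^2)"
    using trans_row_sum_le[OF s a] zeta_pos l1_dist_nonneg[of x y]
    by (intro mult_right_mono) auto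
  finally show ?thesis by simp
qed

lemma Qjoint_abs_le: "x \<in> polX G \<Longrightarrow> s \<in> S \<Longrightarrow> i < n \<Longrightarrow> a \<in> J \<Longrightarrow> \<bar>Qjoint G x i s a\<bar> \<le> 1 / \<zeta>"
proof -
  assume x: "x \<in> polX G" and s: "s \<in> S" and i: "i < n" and a: "a \<in> J"
  have "\<bar>\<Sum>s'\<in>S. trans G s a s' * Val G x i s'\<bar> \<le> (\<Sum>s'\<in>S. trans G s a s') * (1 / \<zeta>)"
    by (rule abs_sum_nonneg_mult_le) (auto intro: trans_nonneg[OF s a] Val_abs_le[OF x i])
  also have "\<dots> \<le> (1 - \<zeta>) * (1 / \<zeta>)"
    using trans_row_sum_le[OF s a] zeta_pos by (intro mult_right_mono) auto
  finally have "\<bar>Qjoint G x i s a\<bar> \<le> 1 + (1 - \<zeta>) * (1 / \<zeta>)"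
    unfolding Qjoint_def using rew_abs_le[OF i s a] by linarith
  also have "\<dots> = 1 / \<zeta>" using zeta_pos by (simp add: field_simps)
  finally show ?thesis .
qed

lemma Qact_abs_le: "x \<in> polX G \<Longrightarrow> s \<in> S \<Longrightarrow> i < n \<Longrightarrow> b \<in> A i \<Longrightarrow> \<bar>Qact G x i s b\<bar> \<le> 1 / \<zeta>"
proof -
  assume x: "x \<in> polX G" and s: "s \<in> S" and i: "i < n" and b: "b \<in> A i"
  have "\<bar>Qact G x i s b\<bar> \<le> (\<Sum>a\<in>J. prob_joint G (x(i:=pure_pol b)) s a) * (1 / \<zeta>)"
    unfolding Qact_def
    by (rule abs_sum_nonneg_mult_le) (auto intro: prob_joint_pure_nonneg[OF x s] Qjoint_abs_le[OF x s i])
  also have "\<dots> = 1 / \<zeta>" using sum_prob_joint_pure[OF x s i b] by simp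
  finally show ?thesis .
qed

lemma Qact_diff_le: "x \<in> polX G \<Longrightarrow> y \<in> polX G \<Longrightarrow> s \<in> S \<Longrightarrow> i < n \<Longrightarrow> b \<in> A i \<Longrightarrow>
  \<bar>Qact G x i s b - Qact G y i s b\<bar> \<le> 3 * l1_dist x y / \<zeta>^2"
proof -
  assume x: "x \<in> polX G" and y: "y \<in> polX G" and s: "s \<in> S" and i: "i < n" and b: "b \<in> A i"
  let ?px = "prob_joint G (x(i:=pure_pol b)) s" and ?py = "prob_joint G (y(i:=pure_pol b)) s"
  have eq: "Qact G x i s b - Qact G y i s b =
      (\<Sum>a\<in>J. (?px a - ?py a) * Qjoint G x i s a) + (\<Sum>a\<in>J. ?py a * (Qjoint G x i s a - Qjoint G y i s a))"
    unfolding Qact_def by (simp add: sum_subtractf[symmetric] sum.distrib[symmetric] algebra_simps)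
  have t1: "\<bar>\<Sum>a\<in>J. (?px a - ?py a) * Qjoint G x i s a\<bar> \<le> l1_dist_at x y s * (1 / \<zeta>)"
  proof -
    have "\<bar>\<Sum>a\<in>J. (?px a - ?py a) * Qjoint G x i s a\<bar> \<le> (\<Sum>a\<in>J. \<bar>?px a - ?py a\<bar>) * (1 / \<zeta>)"
      by (rule abs_sum_mult_le) (rule Qjoint_abs_le[OF x s i])
    also have "\<dots> \<le> l1_dist_at x y s * (1 / \<zeta>)"
      using prob_joint_pure_diff_le[OF x y s i b] zeta_pos by (intro mult_right_mono) auto
    finally show ?thesis .
  qed
  have t2: "\<bar>\<Sum>a\<in>J. ?py a * (Qjoint G x i s a - Qjoint G y i s a)\<bar> \<le> 2 * l1_dist x y / \<zeta>^2"
  proof -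
    have "\<bar>\<Sum>a\<in>J. ?py a * (Qjoint G x i s a - Qjoint G y i s a)\<bar> \<le> (\<Sum>a\<in>J. ?py a) * (2 * l1_dist x y / \<zeta>^2)"
      by (rule abs_sum_nonneg_mult_le) (auto intro: prob_joint_pure_nonneg[OF y s] Qjoint_diff_le[OF x y s i])
    also have "\<dots> = 2 * l1_dist x y / \<zeta>^2" using sum_prob_joint_pure[OF y s i b] by simp
    finally show ?thesis .
  qed
  have "l1_dist_at x y s * (1 / \<zeta>) \<le> l1_dist x y / \<zeta>^2"
  proof -
    have "l1_dist_at x y s * (1 / \<zeta>) \<le> l1_dist x y * (1 / \<zeta>)"
      using l1_dist_at_le[OF s] zeta_pos by (simp add: divide_right_mono)
    also have "\<dots> \<le> l1_dist x y * (1 / \<zeta>^2)"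
      using zeta_pos zeta_le_1 l1_dist_nonneg[of x y]
      by (intro mult_left_mono) (auto simp: field_simps power2_eq_square)
    finally show ?thesis by simp
  qed
  moreover have "\<bar>Qact G x i s b - Qact G y i s b\<bar> \<le> l1_dist_at x y s * (1 / \<zeta>) + 2 * l1_dist x y / \<zeta>^2"
    unfolding eq by (rule order.trans[OF abs_triangle_ineq]) (rule add_mono[OF t1 t2])
  moreover have "l1_dist x y / \<zeta>^2 + 2 * l1_dist x y / \<zeta>^2 = 3 * l1_dist x y / \<zeta>^2" by (simp add: field_simps)
  ultimately show ?thesis by linarith
qed

lemma dvis_diff_le: "x \<in> polX G \<Longrightarrow> y \<in> polX G \<Longrightarrow> s \<in> S \<Longrightarrow> \<bar>dvis G x s - dvis G y s\<bar> \<le> l1_dist x y / \<zeta>^2"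
proof -
  assume x: "x \<in> polX G" and y: "y \<in> polX G" and s: "s \<in> S"
  note cx = row_contraction_Ptrans[OF x] and cy = row_contraction_Ptrans[OF y]
  have eq: "dvis G x s - dvis G y s = (\<Sum>s1\<in>S. dvis G x s1 * (\<Sum>s2\<in>S. (PT x s1 s2 - PT y s1 s2) * N y s2 s))"
    unfolding dvis_eq_neumann[OF cx s] dvis_eq_neumann[OF cy s]
    by (subst weighted_neumann_diff[OF cy cx s]) (intro sum.cong refl, simp add: dvis_eq_neumann[OF cx])
  have inner: "\<bar>\<Sum>s2\<in>S. (PT x s1 s2 - PT y s1 s2) * N y s2 s\<bar> \<le> l1_dist_at x y s1 * (1 / \<zeta>)"
    if s1: "s1 \<in> S" for s1
  proof -
    have "\<bar>\<Sum>s2\<in>S. (PT x s1 s2 - PT y s1 s2) * N y s2 s\<bar> \<le> (\<Sum>s2\<in>S. \<bar>PT x s1 s2 - PT y s1 s2\<bar>) * (1 / \<zeta>)"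
      by (rule abs_sum_mult_le) (use row_contraction.neumann_abs_le[OF cy _ s] in simp)
    also have "\<dots> \<le> l1_dist_at x y s1 * (1 / \<zeta>)"
      using Ptrans_diff_le[OF x y s1] zeta_pos by (intro mult_right_mono) auto
    finally show ?thesis .
  qed
  have "\<bar>dvis G x s - dvis G y s\<bar> \<le> (\<Sum>s1\<in>S. (1 / \<zeta>) * (l1_dist_at x y s1 * (1 / \<zeta>)))"
    unfolding eq
    by (intro order.trans[OF sum_abs] sum_mono; subst abs_mult; rule mult_mono)
       (auto simp: dvis_nonneg[OF x] dvis_le[OF x] l1_dist_at_nonneg less_imp_le[OF zeta_pos]
         intro: inner[simplified])
  also have "\<dots> = l1_dist x y / \<zeta>^2"
    unfolding l1_dist_def
    by (simp add: sum_distrib_left[symmetric] sum_divide_distrib[symmetric] power2_eq_square)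
  finally show ?thesis .
qed

lemma resc_grad_diff_le: "x \<in> polX G \<Longrightarrow> y \<in> polX G \<Longrightarrow> s \<in> S \<Longrightarrow> i < n \<Longrightarrow> a \<in> A i \<Longrightarrow>
  \<bar>resc_grad G c x i s a - resc_grad G c y i s a\<bar> \<le> 4 * l1_dist x y / \<zeta>^3"
proof -
  assume x: "x \<in> polX G" and y: "y \<in> polX G" and s: "s \<in> S" and i: "i < n" and a: "a \<in> A i"
  have z3: "l1_dist x y / \<zeta>^2 \<le> l1_dist x y / \<zeta>^3"
    using zeta_pos zeta_le_1 l1_dist_nonneg[of x y] by (intro divide_left_mono) (auto simp: power_decreasing)
  show ?thesis
  proof (cases "i = c")
    case True
    then show ?thesis using Qact_diff_le[OF x y s i a] z3 l1_dist_nonneg[of x y] unfolding resc_grad_def by simp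
  next
    case False
    have "\<bar>resc_grad G c x i s a - resc_grad G c y i s a\<bar> =
        \<bar>dvis G x s * (Qact G x i s a - Qact G y i s a) + Qact G y i s a * (dvis G x s - dvis G y s)\<bar>"
      unfolding resc_grad_def using False by (simp add: algebra_simps)
    also have "\<dots> \<le> (1 / \<zeta>) * (3 * l1_dist x y / \<zeta>^2) + (1 / \<zeta>) * (l1_dist x y / \<zeta>^2)"
      unfolding abs_mult[symmetric]
      by (intro order.trans[OF abs_triangle_ineq] add_mono; simp only: abs_mult; intro mult_mono)
         (auto simp: dvis_nonneg[OF x s] dvis_le[OF x s] Qact_diff_le[OF x y s i a] Qact_abs_le[OF y s i a]
           dvis_diff_le[OF x y s] less_imp_le[OF zeta_pos])
    also have "\<dots> = 4 * l1_dist x y / \<zeta>^3" by (simp add: field_simps power2_eq_square power3_eq_cube)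
    finally show ?thesis .
  qed
qed

definition nacts :: real where "nacts = (\<Sum>i<n. real (card (A i)))"
definition ncoords :: real where "ncoords = real (card S) * nacts"
definition lip_sq :: real where "lip_sq = 16 * ncoords * (real n * ncoords) / \<zeta>^6"

lemma card_A_le: "i < n \<Longrightarrow> real (card (A i)) \<le> nacts"
  unfolding nacts_def by (rule member_le_sum) auto

lemma nacts_nonneg: "nacts \<ge> 0" unfolding nacts_def by (intro sum_nonneg) auto

lemma lip_sq_nonneg: "lip_sq \<ge> 0"
  unfolding lip_sq_def ncoords_def using nacts_nonneg zeta_pos
  by (intro divide_nonneg_pos mult_nonneg_nonneg) auto

lemma l1_dist_sq_le: "(l1_dist x y)^2 \<le> real n * ncoords * sqdist G x y"
proof -
  define d where "d j s = (\<Sum>b\<in>A j. \<bar>x j s b - y j s b\<bar>)" for j s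
  have l1_dist: "l1_dist x y = (\<Sum>j<n. \<Sum>s\<in>S. d j s)"
    unfolding l1_dist_def l1_dist_at_def d_def by (rule sum.swap)
  have blk: "(d j s)^2 \<le> nacts * (\<Sum>b\<in>A j. (x j s b - y j s b)^2)" if j: "j < n" for j s
  proof -
    have "(d j s)^2 \<le> real (card (A j)) * (\<Sum>b\<in>A j. \<bar>x j s b - y j s b\<bar>^2)"
      unfolding d_def using sum_squared_le_sum_of_squares[of "\<lambda>b. \<bar>x j s b - y j s b\<bar>" "A j"]
      by (simp add: mult.commute)
    also have "\<dots> \<le> nacts * (\<Sum>b\<in>A j. (x j s b - y j s b)^2)"
      by (simp add: mult_right_mono card_A_le j sum_nonneg)
    finally show ?thesis .
  qed
  have st: "(\<Sum>s\<in>S. d j s)^2 \<le> real (card S) * nacts * (\<Sum>s\<in>S. \<Sum>b\<in>A j. (x j s b - y j s b)^2)" if j: "j < n" for j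
  proof -
    have "(\<Sum>s\<in>S. d j s)^2 \<le> real (card S) * (\<Sum>s\<in>S. (d j s)^2)" 
      using sum_squared_le_sum_of_squares[of "d j" S] by (simp add: mult.commute)
    also have "\<dots> \<le> real (card S) * (\<Sum>s\<in>S. nacts * (\<Sum>b\<in>A j. (x j s b - y j s b)^2))"
      by (intro mult_left_mono sum_mono blk j) auto
    finally show ?thesis by (simp add: sum_distrib_left mult.assoc)
  qed
  have "(l1_dist x y)^2 \<le> real n * (\<Sum>j<n. (\<Sum>s\<in>S. d j s)^2)"
    unfolding l1_dist using sum_squared_le_sum_of_squares[of "\<lambda>j. \<Sum>s\<in>S. d j s" "{..<n}"]
    by (simp add: mult.commute)
  also have "\<dots> \<le> real n * (\<Sum>j<n. real (card S) * nacts * (\<Sum>s\<in>S. \<Sum>b\<in>A j. (x j s b - y j s b)^2))"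
    by (intro mult_left_mono sum_mono st) auto
  also have "\<dots> = real n * ncoords * sqdist G x y"
    unfolding ncoords_def sqdist_def by (simp add: sum_distrib_left mult.assoc)
  finally show ?thesis .
qed

lemma resc_grad_lipschitz:
  "x \<in> polX G \<Longrightarrow> y \<in> polX G \<Longrightarrow> sqdist G (resc_grad G c x) (resc_grad G c y) \<le> lip_sq * sqdist G x y"
proof -
  assume x: "x \<in> polX G" and y: "y \<in> polX G"
  define B where "B = 4 * l1_dist x y / \<zeta>^3"
  have pt: "(resc_grad G c x i s a - resc_grad G c y i s a)^2 \<le> B^2" if "i < n" "s \<in> S" "a \<in> A i" for i s a
  proof -
    have "\<bar>resc_grad G c x i s a - resc_grad G c y i s a\<bar> \<le> B"
      unfolding B_def by (rule resc_grad_diff_le[OF x y that(2) that(1) that(3)])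
    then show ?thesis by (metis abs_ge_zero order_trans power2_abs power_mono)
  qed
  have "sqdist G (resc_grad G c x) (resc_grad G c y) \<le> (\<Sum>i<n. \<Sum>s\<in>S. \<Sum>a\<in>A i. B^2)"
    unfolding sqdist_def by (intro sum_mono pt) auto
  also have "\<dots> = ncoords * B^2"
    unfolding ncoords_def nacts_def by (simp add: sum_distrib_right sum_distrib_left mult.assoc)
  also have "\<dots> = ncoords * 16 / \<zeta>^6 * (l1_dist x y)^2"
    unfolding B_def by (simp add: power_divide power_mult_distrib field_simps)
  also have "\<dots> \<le> ncoords * 16 / \<zeta>^6 * (real n * ncoords * sqdist G x y)"
    using nacts_nonneg zeta_pos by (intro mult_left_mono l1_dist_sq_le) (auto simp: ncoords_def)
  also have "\<dots> = lip_sq * sqdist G x y" unfolding lip_sq_def by (simp add: field_simps)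
  finally show ?thesis .
qed

lemma resc_grad_abs_le: "x \<in> polX G \<Longrightarrow> i < n \<Longrightarrow> s \<in> S \<Longrightarrow> a \<in> A i \<Longrightarrow> \<bar>resc_grad G c x i s a\<bar> \<le> 1 / \<zeta>^2"
proof -
  assume x: "x \<in> polX G" and i: "i < n" and s: "s \<in> S" and a: "a \<in> A i"
  have z: "1 / \<zeta> \<le> 1 / \<zeta>^2" using zeta_pos zeta_le_1 by (simp add: field_simps power2_eq_square mult_left_le)
  show ?thesis
  proof (cases "i = c")
    case True then show ?thesis using Qact_abs_le[OF x s i a] z unfolding resc_grad_def by simp
  next
    case False
    have "\<bar>resc_grad G c x i s a\<bar> = dvis G x s * \<bar>Qact G x i s a\<bar>"
      unfolding resc_grad_def using False dvis_nonneg[OF x s] by (simp add: abs_mult)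
    also have "\<dots> \<le> (1 / \<zeta>) * (1 / \<zeta>)"
      by (intro mult_mono dvis_le[OF x s] Qact_abs_le[OF x s i a])
        (auto simp: dvis_nonneg[OF x s] less_imp_le[OF zeta_pos])
    finally show ?thesis by (simp add: power2_eq_square)
  qed
qed

end

lemma sum_sq_diff_prob_le_2:
  fixes p q :: "'a \<Rightarrow> real"
  assumes B: "finite B" and p: "\<forall>a\<in>B. p a \<ge> 0" "(\<Sum>a\<in>B. p a) = 1"
    and q: "\<forall>a\<in>B. q a \<ge> 0" "(\<Sum>a\<in>B. q a) = 1"
  shows "(\<Sum>a\<in>B. (p a - q a)^2) \<le> 2"
proof -
  have "(p a - q a)^2 \<le> p a + q a" if a: "a \<in> B" for a
  proof -
    have "p a \<le> 1" "q a \<le> 1"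
      using member_le_sum[of a B p] member_le_sum[of a B q] p q B a by auto
    then have "(p a)^2 \<le> p a" "(q a)^2 \<le> q a"
      using p q a by (auto simp: power2_eq_square mult_le_one mult_left_le)
    moreover have "(p a - q a)^2 \<le> (p a)^2 + (q a)^2"
      using p q a by (simp add: power2_eq_square algebra_simps)
    ultimately show ?thesis by linarith
  qed
  then have "(\<Sum>a\<in>B. (p a - q a)^2) \<le> (\<Sum>a\<in>B. p a + q a)" by (intro sum_mono)
  also have "\<dots> = 2" using p q by (simp add: sum.distrib)
  finally show ?thesis .
qed

context wf_mgame begin

definition wsqdist :: "(nat \<Rightarrow> 's \<Rightarrow> real) \<Rightarrow> ('s,'a) pol \<Rightarrow> ('s,'a) pol \<Rightarrow> real" where
  "wsqdist w x y = (\<Sum>i<n. \<Sum>s\<in>S. w i s * (\<Sum>a\<in>A i. (x i s a - y i s a)^2))"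

definition winprod :: "(nat \<Rightarrow> 's \<Rightarrow> real) \<Rightarrow> ('s,'a) pol \<Rightarrow> ('s,'a) pol \<Rightarrow> real" where
  "winprod w g d = (\<Sum>i<n. \<Sum>s\<in>S. w i s * (\<Sum>a\<in>A i. g i s a * d i s a))"

lemma wsqdist_ge:
  "(\<And>i s. i < n \<Longrightarrow> s \<in> S \<Longrightarrow> m \<le> w i s) \<Longrightarrow> m * sqdist G x y \<le> wsqdist w x y"
  unfolding wsqdist_def sqdist_def sum_distrib_left by (intro sum_mono mult_right_mono sum_nonneg) auto

lemma wsqdist_le:
  "(\<And>i s. i < n \<Longrightarrow> s \<in> S \<Longrightarrow> w i s \<le> M) \<Longrightarrow> wsqdist w x y \<le> M * sqdist G x y"
  unfolding wsqdist_def sqdist_def sum_distrib_left by (intro sum_mono mult_right_mono sum_nonneg) auto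

lemma sqdist_triangle: "sqdist G x y \<le> 2 * sqdist G x w + 2 * sqdist G w y"
proof -
  have "(x i s a - y i s a)^2 \<le> 2 * (x i s a - w i s a)^2 + 2 * (w i s a - y i s a)^2" for i s a
  proof -
    have "2 * (x i s a - w i s a)^2 + 2 * (w i s a - y i s a)^2 - (x i s a - y i s a)^2 =
      (x i s a - 2 * w i s a + y i s a)^2"
      by (simp add: power2_eq_square algebra_simps)
    then show ?thesis by (smt (verit) zero_le_power2)
  qed
  then have "sqdist G x y \<le> (\<Sum>i<n. \<Sum>s\<in>S. \<Sum>a\<in>A i. 2 * (x i s a - w i s a)^2 + 2 * (w i s a - y i s a)^2)"
    unfolding sqdist_def by (intro sum_mono) auto
  also have "\<dots> = 2 * sqdist G x w + 2 * sqdist G w y"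
    unfolding sqdist_def by (simp add: sum.distrib sum_distrib_left)
  finally show ?thesis .
qed

lemma block_sqdist_polX_le_2:
  "x \<in> polX G \<Longrightarrow> i < n \<Longrightarrow> s \<in> S \<Longrightarrow> \<forall>a\<in>A i. z a \<ge> 0 \<Longrightarrow> (\<Sum>a\<in>A i. z a) = 1 \<Longrightarrow>
    (\<Sum>a\<in>A i. (z a - x i s a)^2) \<le> 2"
  by (rule sum_sq_diff_prob_le_2) (auto simp: finite_A polX_nonneg polX_sum)

lemma sqdist_polX_le: "x \<in> polX G \<Longrightarrow> y \<in> polX G \<Longrightarrow> sqdist G x y \<le> 2 * (real n * real (card S))"
proof -
  assume x: "x \<in> polX G" and y: "y \<in> polX G"
  have "sqdist G x y \<le> (\<Sum>i<n. \<Sum>s\<in>S. (2::real))"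
    unfolding sqdist_def
    by (intro sum_mono block_sqdist_polX_le_2[OF y]) (auto simp: polX_nonneg[OF x] polX_sum[OF x])
  then show ?thesis by simp
qed

end

section \<open>Single controller: deviation gains\<close>

locale single_controller_game = wf_mgame +
  fixes c :: nat
  assumes single_controller: "single_controller G c"
begin

lemma c_less_n: "c < n"
  using single_controller unfolding single_controller_def by simp

definition ctrl_trans where
  "ctrl_trans s b s' = trans G s ((SOME a. a \<in> J)(c := b)) s'"

lemma trans_eq_ctrl_trans:
  assumes s: "s \<in> S" and a: "a \<in> J" and s': "s' \<in> S"
  shows "trans G s a s' = ctrl_trans s (a c) s'"
proof -
  define a0 where "a0 = (SOME a. a \<in> J)"
  have a0: "a0 \<in> J" unfolding a0_def using J_nonempty by (simp add: some_in_eq)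
  have "a0(c := a c) \<in> J"
    using a a0 c_less_n unfolding joint_def by (auto simp: PiE_iff extensional_def)
  then show ?thesis
    using single_controller s a s' unfolding single_controller_def ctrl_trans_def a0_def[symmetric]
    by (metis fun_upd_same)
qed

lemma sum_prob_joint_mult_ctrl: "(\<Sum>a\<in>J. prob_joint G x s a * F (a c)) =
   (\<Sum>b\<in>A c. x c s b * F b) * (\<Prod>j\<in>{..<n}-{c}. \<Sum>b\<in>A j. x j s b)"
proof -
  define f where "f j b = (if j = c then x c s b * F b else x j s b)" for j b
  have "(\<Sum>a\<in>J. prob_joint G x s a * F (a c)) = (\<Sum>a\<in>J. \<Prod>j<n. f j (a j))"
  proof (intro sum.cong refl)
    fix a assume "a \<in> J"
    have "(\<Prod>j\<in>{..<n}-{c}. f j (a j)) = (\<Prod>j\<in>{..<n}-{c}. x j s (a j))"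
      by (intro prod.cong) (auto simp: f_def)
    then show "prob_joint G x s a * F (a c) = (\<Prod>j<n. f j (a j))"
      unfolding prob_joint_def using c_less_n by (simp add: prod.remove[of _ c] f_def)
  qed
  also have "\<dots> = (\<Prod>j<n. \<Sum>b\<in>A j. f j b)"
    unfolding joint_def by (rule prod_sum_PiE[symmetric]) (auto simp: finite_A)
  also have "\<dots> = (\<Sum>b\<in>A c. f c b) * (\<Prod>j\<in>{..<n}-{c}. \<Sum>b\<in>A j. f j b)"
    using c_less_n by (simp add: prod.remove[of _ c])
  also have "(\<Prod>j\<in>{..<n}-{c}. \<Sum>b\<in>A j. f j b) = (\<Prod>j\<in>{..<n}-{c}. \<Sum>b\<in>A j. x j s b)"
    by (intro prod.cong) (auto simp: f_def)
  finally show ?thesis by (simp add: f_def)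
qed

lemma Ptrans_eq_ctrl_marginal:
  assumes z: "z \<in> polX G" and s: "s \<in> S" and s': "s' \<in> S"
  shows "PT z s s' = (\<Sum>b\<in>A c. z c s b * ctrl_trans s b s')"
proof -
  have "PT z s s' = (\<Sum>a\<in>J. prob_joint G z s a * ctrl_trans s (a c) s')"
    unfolding Ptrans_def using s s' by (simp add: trans_eq_ctrl_trans cong: sum.cong)
  also have "\<dots> = (\<Sum>b\<in>A c. z c s b * ctrl_trans s b s') * (\<Prod>j\<in>{..<n}-{c}. \<Sum>b\<in>A j. z j s b)"
    by (rule sum_prob_joint_mult_ctrl)
  also have "(\<Prod>j\<in>{..<n}-{c}. \<Sum>b\<in>A j. z j s b) = 1"
    by (intro prod.neutral ballI) (use polX_sum[OF z _ s] in blast)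
  finally show ?thesis by simp
qed

lemma dvis_eq_if_ctrl_eq:
  assumes x: "x \<in> polX G" and y: "y \<in> polX G" and s: "s \<in> S"
    and eq: "\<And>s b. s \<in> S \<Longrightarrow> b \<in> A c \<Longrightarrow> x c s b = y c s b"
  shows "dvis G x s = dvis G y s"
proof -
  have "PT x u v = PT y u v" if "u \<in> S" "v \<in> S" for u v
    using that eq by (simp add: Ptrans_eq_ctrl_marginal[OF x] Ptrans_eq_ctrl_marginal[OF y])
  then have "mpow G x h s0 s = mpow G y h s0 s" for h s0
    unfolding mpow_eq_matpow using s by (intro matpow_cong)
  then show ?thesis unfolding dvis_def by simp
qed

definition ctrl_weight where
  "ctrl_weight z i s = (if i = c then dvis G z s else 1)"

lemma ctrl_weight_bounds:
  assumes "z \<in> polX G" "s \<in> S"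
  shows "rho_min \<le> ctrl_weight z i s" "ctrl_weight z i s \<le> 1 / \<zeta>"
  using dvis_ge_rho[OF assms] dvis_le[OF assms] rho_min_le[OF assms(2)] rho_min_le_1 zeta_pos zeta_le_1
  by (auto simp: ctrl_weight_def)

text \<open>Deviations of the non-controllers do not move the visitation, and the controller's
  rescaling cancels its visitation factor; this is what makes the weights independent of \<open>x\<close>.\<close>

lemma deviation_gain_eq:
  assumes x: "x \<in> polX G" and f: "pol_i G i f" and i: "i < n"
  shows "Vrho G (x(i := f)) i - Vrho G x i =
    (\<Sum>s\<in>S. ctrl_weight (x(i := f)) i s * (\<Sum>a\<in>A i. resc_grad G c x i s a * (f s a - x i s a)))"
proof -
  have xf: "x(i := f) \<in> polX G" by (rule polX_upd[OF x f i])
  have "Vrho G (x(i := f)) i - Vrho G x i =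
    (\<Sum>s\<in>S. dvis G (x(i := f)) s * (\<Sum>b\<in>A i. (f s b - x i s b) * Qact G x i s b))"
    by (rule performance_difference_polX[OF x f i])
  also have "\<dots> = (\<Sum>s\<in>S. ctrl_weight (x(i := f)) i s * (\<Sum>a\<in>A i. resc_grad G c x i s a * (f s a - x i s a)))"
  proof (intro sum.cong refl)
    fix s assume s: "s \<in> S"
    show "dvis G (x(i := f)) s * (\<Sum>b\<in>A i. (f s b - x i s b) * Qact G x i s b) =
      ctrl_weight (x(i := f)) i s * (\<Sum>a\<in>A i. resc_grad G c x i s a * (f s a - x i s a))"
    proof (cases "i = c")
      case True
      then show ?thesis by (simp add: ctrl_weight_def resc_grad_def mult.commute)
    next
      case False
      have "dvis G (x(i := f)) s = dvis G x s"
        by (rule dvis_eq_if_ctrl_eq[OF xf x s]) (simp add: False[symmetric])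
      then show ?thesis using False by (simp add: ctrl_weight_def resc_grad_def sum_distrib_left mult_ac)
    qed
  qed
  finally show ?thesis .
qed

lemma sum_deviation_gain_eq:
  assumes x: "x \<in> polX G" and z: "z \<in> polX G"
  shows "(\<Sum>i<n. Vrho G (x(i := z i)) i - Vrho G x i) =
    winprod (ctrl_weight z) (resc_grad G c x) (\<lambda>i s a. z i s a - x i s a)"
  unfolding winprod_def
proof (intro sum.cong refl)
  fix i assume "i \<in> {..<n}"
  then have i: "i < n" by simp
  have "ctrl_weight (x(i := z i)) i s = ctrl_weight z i s" if s: "s \<in> S" for s
  proof (cases "i = c")
    case True
    then show ?thesis
      using dvis_eq_if_ctrl_eq[OF polX_upd[OF x polX_pol_i[OF z i] i] z s] by (simp add: ctrl_weight_def)
  qed (simp add: ctrl_weight_def)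
  then show "Vrho G (x(i := z i)) i - Vrho G x i =
      (\<Sum>s\<in>S. ctrl_weight z i s * (\<Sum>a\<in>A i. resc_grad G c x i s a * (z i s a - x i s a)))"
    using deviation_gain_eq[OF x polX_pol_i[OF z i] i] by simp
qed

lemma step_eq_proj:
  assumes xp: "xp \<in> polX G"
  shows "step G c \<eta> xh xp = proj G (\<lambda>i s a. xh i s a + \<eta> * resc_grad G c xp i s a)"
  unfolding step_def
proof (rule proj_cong)
  fix i s a assume i: "i < n" and s: "s \<in> S" and a: "a \<in> A i"
  show "xh i s a - \<eta> * (Aresc G c xp i s a * Fop G xp i s a) = xh i s a + \<eta> * resc_grad G c xp i s a"
    using dvis_pos[OF xp s] unfolding Aresc_def Fop_def resc_grad_def grad_eq[OF xp i s a] by auto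
qed

lemma step_in_polX: "step G c \<eta> xh xp \<in> polX G"
  unfolding step_def by (rule proj_in_polX)

lemma step_variational_ineq:
  assumes xp: "xp \<in> polX G" and i: "i < n" and s: "s \<in> S"
    and z: "\<forall>a\<in>A i. z a \<ge> 0" "(\<Sum>a\<in>A i. z a) = 1"
  shows "(\<Sum>a\<in>A i. (xh i s a + \<eta> * resc_grad G c xp i s a - step G c \<eta> xh xp i s a) *
      (z a - step G c \<eta> xh xp i s a)) \<le> 0"
  unfolding step_eq_proj[OF xp] by (rule proj_variational_ineq[OF i s z])

end

section \<open>Optimistic gradient iterates\<close>

lemma optimistic_step_ineq:
  fixes u v w z g g' :: "'a \<Rightarrow> real"
  assumes VI1: "(\<Sum>a\<in>B. (u a + \<eta> * g a - v a) * (z a - v a)) \<le> 0"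
    and VI2: "(\<Sum>a\<in>B. (u a + \<eta> * g' a - w a) * (v a - w a)) \<le> 0"
  shows "\<eta> * (\<Sum>a\<in>B. g a * (z a - w a)) \<le>
    (\<Sum>a\<in>B. (u a - z a)^2) / 2 - (\<Sum>a\<in>B. (v a - z a)^2) / 2 - (\<Sum>a\<in>B. (w a - u a)^2) / 2
    - (\<Sum>a\<in>B. (v a - w a)^2) / 4 + \<eta>^2 * (\<Sum>a\<in>B. (g a - g' a)^2)"
proof -
  have pt: "\<eta> * (g a * (z a - w a)) \<le> (u a + \<eta> * g a - v a) * (z a - v a) + (u a + \<eta> * g' a - w a) * (v a - w a)
     + ((u a - z a)^2 / 2 - (v a - z a)^2 / 2 - (w a - u a)^2 / 2 - (v a - w a)^2 / 4 + \<eta>^2 * (g a - g' a)^2)"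
    for a
  proof -
    have "(u a + \<eta> * g a - v a) * (z a - v a) + (u a + \<eta> * g' a - w a) * (v a - w a)
     + ((u a - z a)^2 / 2 - (v a - z a)^2 / 2 - (w a - u a)^2 / 2 - (v a - w a)^2 / 4 + \<eta>^2 * (g a - g' a)^2)
     - \<eta> * (g a * (z a - w a)) = (\<eta> * (g a - g' a) - (v a - w a) / 2)^2"
      by (simp add: power2_eq_square field_simps)
    then show ?thesis by (smt (verit) zero_le_power2)
  qed
  then have "\<eta> * (\<Sum>a\<in>B. g a * (z a - w a)) \<le>
      (\<Sum>a\<in>B. (u a + \<eta> * g a - v a) * (z a - v a)) + (\<Sum>a\<in>B. (u a + \<eta> * g' a - w a) * (v a - w a))
     + ((\<Sum>a\<in>B. (u a - z a)^2) / 2 - (\<Sum>a\<in>B. (v a - z a)^2) / 2 - (\<Sum>a\<in>B. (w a - u a)^2) / 2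
     - (\<Sum>a\<in>B. (v a - w a)^2) / 4 + \<eta>^2 * (\<Sum>a\<in>B. (g a - g' a)^2))"
    using sum_mono[of B _ _, OF pt] by (simp add: sum_distrib_left sum.distrib sum_subtractf sum_divide_distrib)
  then show ?thesis using VI1 VI2 by linarith
qed

lemma exists_le_average:
  fixes f :: "nat \<Rightarrow> real"
  assumes T: "T \<ge> 1" and sum: "(\<Sum>t<T. f t) \<le> B"
  shows "\<exists>t<T. f t \<le> B / real T"
proof (rule ccontr)
  assume "\<not> ?thesis"
  then have "\<And>t. t < T \<Longrightarrow> B / real T < f t" by force
  then have "(\<Sum>t<T. B / real T) < (\<Sum>t<T. f t)"
    using T by (intro sum_strict_mono) (auto simp: lessThan_empty_iff)
  then show False using sum T by simp
qed

locale rogd_run = single_controller_game +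
  fixes \<eta> :: real and x0
  assumes eta_pos: "\<eta> > 0" and x0_in_polX: "x0 \<in> polX G"
begin

definition X where "X t = fst (rogd G c \<eta> x0 t)"
definition Xhat where "Xhat t = snd (rogd G c \<eta> x0 t)"

abbreviation "g t \<equiv> resc_grad G c (X t)"

lemma X_0: "X 0 = x0" "Xhat 0 = x0"
  unfolding X_def Xhat_def by simp_all

lemma X_Suc: "X (Suc t) = step G c \<eta> (Xhat t) (X t)" "Xhat (Suc t) = step G c \<eta> (Xhat t) (X (Suc t))"
  unfolding X_def Xhat_def by (simp_all add: Let_def)

lemma X_in_polX: "X t \<in> polX G"
  by (cases t) (simp only: X_0 x0_in_polX, simp only: X_Suc step_in_polX)

lemma Xhat_in_polX: "Xhat t \<in> polX G"
  by (cases t) (simp only: X_0 x0_in_polX, simp only: X_Suc step_in_polX)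

lemma optimistic_block_step:
  assumes i: "i < n" and s: "s \<in> S" and z: "\<forall>a\<in>A i. z a \<ge> 0" "(\<Sum>a\<in>A i. z a) = 1"
  shows "\<eta> * (\<Sum>a\<in>A i. g (Suc t) i s a * (z a - X (Suc t) i s a)) \<le>
    (\<Sum>a\<in>A i. (Xhat t i s a - z a)^2) / 2 - (\<Sum>a\<in>A i. (Xhat (Suc t) i s a - z a)^2) / 2
    - (\<Sum>a\<in>A i. (X (Suc t) i s a - Xhat t i s a)^2) / 2
    - (\<Sum>a\<in>A i. (Xhat (Suc t) i s a - X (Suc t) i s a)^2) / 4
    + \<eta>^2 * (\<Sum>a\<in>A i. (g (Suc t) i s a - g t i s a)^2)"
proof (rule optimistic_step_ineq)
  show "(\<Sum>a\<in>A i. (Xhat t i s a + \<eta> * g (Suc t) i s a - Xhat (Suc t) i s a) * (z a - Xhat (Suc t) i s a)) \<le> 0"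
    unfolding X_Suc(2)[of t] by (rule step_variational_ineq[OF X_in_polX i s z])
  show "(\<Sum>a\<in>A i. (Xhat t i s a + \<eta> * g t i s a - X (Suc t) i s a) * (Xhat (Suc t) i s a - X (Suc t) i s a)) \<le> 0"
    unfolding X_Suc(1)[of t]
    by (rule step_variational_ineq[OF X_in_polX i s])
       (use polX_nonneg[OF Xhat_in_polX i s] polX_sum[OF Xhat_in_polX i s] in auto)
qed

lemma weighted_optimistic_step:
  assumes w: "\<And>i s. i < n \<Longrightarrow> s \<in> S \<Longrightarrow> w i s \<ge> 0" and z: "z \<in> polX G"
  shows "\<eta> * winprod w (g (Suc t)) (\<lambda>i s a. z i s a - X (Suc t) i s a) \<le>
    wsqdist w (Xhat t) z / 2 - wsqdist w (Xhat (Suc t)) z / 2 - wsqdist w (X (Suc t)) (Xhat t) / 2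
    - wsqdist w (Xhat (Suc t)) (X (Suc t)) / 4 + \<eta>^2 * wsqdist w (g (Suc t)) (g t)"
proof -
  define R where "R i s = (\<Sum>a\<in>A i. (Xhat t i s a - z i s a)^2) / 2
    - (\<Sum>a\<in>A i. (Xhat (Suc t) i s a - z i s a)^2) / 2
    - (\<Sum>a\<in>A i. (X (Suc t) i s a - Xhat t i s a)^2) / 2
    - (\<Sum>a\<in>A i. (Xhat (Suc t) i s a - X (Suc t) i s a)^2) / 4
    + \<eta>^2 * (\<Sum>a\<in>A i. (g (Suc t) i s a - g t i s a)^2)" for i s
  have "\<eta> * winprod w (g (Suc t)) (\<lambda>i s a. z i s a - X (Suc t) i s a) =
     (\<Sum>i<n. \<Sum>s\<in>S. w i s * (\<eta> * (\<Sum>a\<in>A i. g (Suc t) i s a * (z i s a - X (Suc t) i s a))))"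
    unfolding winprod_def by (simp add: sum_distrib_left mult_ac)
  also have "\<dots> \<le> (\<Sum>i<n. \<Sum>s\<in>S. w i s * R i s)"
    unfolding R_def
    by (intro sum_mono mult_left_mono optimistic_block_step w)
       (auto simp: polX_nonneg[OF z] polX_sum[OF z])
  also have "\<dots> = wsqdist w (Xhat t) z / 2 - wsqdist w (Xhat (Suc t)) z / 2 - wsqdist w (X (Suc t)) (Xhat t) / 2
    - wsqdist w (Xhat (Suc t)) (X (Suc t)) / 4 + \<eta>^2 * wsqdist w (g (Suc t)) (g t)"
    unfolding wsqdist_def R_def
    by (simp add: sum_distrib_left sum.distrib sum_subtractf sum_divide_distrib right_diff_distrib
        distrib_left mult_ac)
  finally show ?thesis .
qed

lemma regret_condition_weighted:
  assumes "regret_condition G"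
  obtains z where "z \<in> polX G"
    and "0 \<le> (\<Sum>t<T. winprod (ctrl_weight z) (g (Suc t)) (\<lambda>i s a. z i s a - X (Suc t) i s a))"
proof -
  obtain z where z: "z \<in> polX G" and regret:
    "(\<Sum>t=1..T. \<Sum>i<n. Vrho G ((X t)(i := z i)) i) - (\<Sum>t=1..T. \<Sum>i<n. Vrho G (X t) i) \<ge> 0"
    using assms X_in_polX unfolding regret_condition_def by blast
  have "(\<Sum>t=1..T. \<Sum>i<n. Vrho G ((X t)(i := z i)) i) - (\<Sum>t=1..T. \<Sum>i<n. Vrho G (X t) i) =
      (\<Sum>t=Suc 0..T. winprod (ctrl_weight z) (g t) (\<lambda>i s a. z i s a - X t i s a))"
    by (simp add: sum_subtractf[symmetric] sum_deviation_gain_eq[OF X_in_polX z])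
  also have "\<dots> = (\<Sum>t<T. winprod (ctrl_weight z) (g (Suc t)) (\<lambda>i s a. z i s a - X (Suc t) i s a))"
    by (rule sum.atLeast1_atMost_eq)
  finally show ?thesis using that z regret by simp
qed

lemma weighted_step_bound:
  assumes z: "z \<in> polX G"
  shows "\<eta> * winprod (ctrl_weight z) (g (Suc t)) (\<lambda>i s a. z i s a - X (Suc t) i s a) \<le>
    wsqdist (ctrl_weight z) (Xhat t) z / 2 - wsqdist (ctrl_weight z) (Xhat (Suc t)) z / 2
    - rho_min / 2 * sqdist G (X (Suc t)) (Xhat t) - rho_min / 4 * sqdist G (Xhat (Suc t)) (X (Suc t))
    + \<eta>^2 / \<zeta> * lip_sq * (2 * sqdist G (X (Suc t)) (Xhat t) + 2 * sqdist G (Xhat t) (X t))"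
proof -
  have w: "rho_min \<le> ctrl_weight z i s" "ctrl_weight z i s \<le> 1 / \<zeta>" if "s \<in> S" for i s
    using ctrl_weight_bounds[OF z that] by auto
  have "wsqdist (ctrl_weight z) (g (Suc t)) (g t) \<le> 1 / \<zeta> * sqdist G (g (Suc t)) (g t)"
    by (rule wsqdist_le) (use w in auto)
  also have "\<dots> \<le> 1 / \<zeta> * (lip_sq * sqdist G (X (Suc t)) (X t))"
    using zeta_pos by (intro mult_left_mono resc_grad_lipschitz X_in_polX) auto
  also have "\<dots> \<le> 1 / \<zeta> * (lip_sq * (2 * sqdist G (X (Suc t)) (Xhat t) + 2 * sqdist G (Xhat t) (X t)))"
    using zeta_pos lip_sq_nonneg by (intro mult_left_mono sqdist_triangle) auto
  finally have "\<eta>^2 * wsqdist (ctrl_weight z) (g (Suc t)) (g t) \<le>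
      \<eta>^2 * (1 / \<zeta> * (lip_sq * (2 * sqdist G (X (Suc t)) (Xhat t) + 2 * sqdist G (Xhat t) (X t))))"
    by (rule mult_left_mono) simp
  then have "\<eta>^2 * wsqdist (ctrl_weight z) (g (Suc t)) (g t) \<le>
      \<eta>^2 / \<zeta> * lip_sq * (2 * sqdist G (X (Suc t)) (Xhat t) + 2 * sqdist G (Xhat t) (X t))"
    by (simp add: mult_ac)
  moreover have "rho_min * sqdist G (X (Suc t)) (Xhat t) \<le> wsqdist (ctrl_weight z) (X (Suc t)) (Xhat t)"
    "rho_min * sqdist G (Xhat (Suc t)) (X (Suc t)) \<le> wsqdist (ctrl_weight z) (Xhat (Suc t)) (X (Suc t))"
    by (rule wsqdist_ge; use w in auto)+
  moreover have w_nonneg: "ctrl_weight z i s \<ge> 0" if "i < n" "s \<in> S" for i s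
    using w(1)[OF that(2), of i] rho_min_pos by linarith
  ultimately show ?thesis using weighted_optimistic_step[of "ctrl_weight z", OF w_nonneg z, of t] by linarith
qed

end

lemma (in single_controller_game) wsqdist_ctrl_weight_polX:
  assumes x: "x \<in> polX G" and z: "z \<in> polX G"
  shows "0 \<le> wsqdist (ctrl_weight z) x z" "wsqdist (ctrl_weight z) x z \<le> 2 / \<zeta> * (real n * real (card S))"
proof -
  have w: "rho_min \<le> ctrl_weight z i s" "ctrl_weight z i s \<le> 1 / \<zeta>" if "s \<in> S" for i s
    using ctrl_weight_bounds[OF z that] by auto
  have "0 \<le> rho_min * sqdist G x z" using rho_min_pos sqdist_nonneg[of x z] by simp
  also have "\<dots> \<le> wsqdist (ctrl_weight z) x z" by (rule wsqdist_ge) (use w in auto)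
  finally show "0 \<le> wsqdist (ctrl_weight z) x z" .
  have "wsqdist (ctrl_weight z) x z \<le> 1 / \<zeta> * sqdist G x z" by (rule wsqdist_le) (use w in auto)
  also have "\<dots> \<le> 1 / \<zeta> * (2 * (real n * real (card S)))"
    using zeta_pos by (intro mult_left_mono sqdist_polX_le x z) auto
  finally show "wsqdist (ctrl_weight z) x z \<le> 2 / \<zeta> * (real n * real (card S))" by simp
qed

context rogd_run begin

lemma sum_sqdist_Xhat_X_le:
  "(\<Sum>t<T. sqdist G (Xhat t) (X t)) \<le> (\<Sum>t<T. sqdist G (Xhat (Suc t)) (X (Suc t)))"
proof -
  have "(\<Sum>t<T. sqdist G (Xhat t) (X t)) \<le> (\<Sum>t<Suc T. sqdist G (Xhat t) (X t))"
    by (simp add: sqdist_nonneg)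
  also have "\<dots> = (\<Sum>t<T. sqdist G (Xhat (Suc t)) (X (Suc t)))"
    unfolding sum.lessThan_Suc_shift by (simp add: X_0 sqdist_def)
  finally show ?thesis .
qed

lemma summed_step_bound:
  assumes z: "z \<in> polX G"
    and regret: "0 \<le> (\<Sum>t<T. winprod (ctrl_weight z) (g (Suc t)) (\<lambda>i s a. z i s a - X (Suc t) i s a))"
  shows "rho_min / 2 * (\<Sum>t<T. sqdist G (X (Suc t)) (Xhat t)) +
      rho_min / 4 * (\<Sum>t<T. sqdist G (Xhat (Suc t)) (X (Suc t)))
    \<le> wsqdist (ctrl_weight z) x0 z / 2 - wsqdist (ctrl_weight z) (Xhat T) z / 2
      + 2 * (\<eta>^2 / \<zeta> * lip_sq) * (\<Sum>t<T. sqdist G (X (Suc t)) (Xhat t))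
      + 2 * (\<eta>^2 / \<zeta> * lip_sq) * (\<Sum>t<T. sqdist G (Xhat t) (X t))"
proof -
  define a where "a t = sqdist G (X (Suc t)) (Xhat t)" for t
  define b where "b t = sqdist G (Xhat (Suc t)) (X (Suc t))" for t
  define e where "e t = sqdist G (Xhat t) (X t)" for t
  define D where "D t = wsqdist (ctrl_weight z) (Xhat t) z / 2" for t
  define \<kappa> where "\<kappa> = \<eta>^2 / \<zeta> * lip_sq"
  have "0 \<le> (\<Sum>t<T. \<eta> * winprod (ctrl_weight z) (g (Suc t)) (\<lambda>i s a. z i s a - X (Suc t) i s a))"
    using regret eta_pos by (simp add: sum_distrib_left[symmetric])
  also have "\<dots> \<le> (\<Sum>t<T. (D t - D (Suc t)) + (\<kappa> * (2 * a t + 2 * e t) - rho_min / 2 * a t - rho_min / 4 * b t))"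
  proof (rule sum_mono)
    fix t
    show "\<eta> * winprod (ctrl_weight z) (g (Suc t)) (\<lambda>i s a. z i s a - X (Suc t) i s a) \<le>
        (D t - D (Suc t)) + (\<kappa> * (2 * a t + 2 * e t) - rho_min / 2 * a t - rho_min / 4 * b t)"
      using weighted_step_bound[OF z, of t] unfolding a_def b_def e_def D_def \<kappa>_def by linarith
  qed
  also have "\<dots> = D 0 - D T + 2 * \<kappa> * (\<Sum>t<T. a t) + 2 * \<kappa> * (\<Sum>t<T. e t)
      - rho_min / 2 * (\<Sum>t<T. a t) - rho_min / 4 * (\<Sum>t<T. b t)"
    unfolding sum.distrib sum_lessThan_telescope'
    by (simp add: sum.distrib sum_subtractf sum_distrib_left sum_divide_distrib algebra_simps)
  finally show ?thesis unfolding a_def b_def e_def D_def \<kappa>_def X_0 by linarith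
qed

lemma movement_sum_le:
  assumes lr: "2 * \<eta>^2 / \<zeta> * lip_sq \<le> rho_min / 8" and z: "z \<in> polX G"
    and regret: "0 \<le> (\<Sum>t<T. winprod (ctrl_weight z) (g (Suc t)) (\<lambda>i s a. z i s a - X (Suc t) i s a))"
  shows "(\<Sum>t<T. sqdist G (X (Suc t)) (Xhat t) + sqdist G (Xhat (Suc t)) (X (Suc t)))
    \<le> 8 / \<zeta> * (real n * real (card S)) / rho_min"
proof -
  define a where "a = (\<Sum>t<T. sqdist G (X (Suc t)) (Xhat t))"
  define b where "b = (\<Sum>t<T. sqdist G (Xhat (Suc t)) (X (Suc t)))"
  define e where "e = (\<Sum>t<T. sqdist G (Xhat t) (X t))"
  define \<kappa> where "\<kappa> = \<eta>^2 / \<zeta> * lip_sq"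
  define W where "W = 1 / \<zeta> * (real n * real (card S))"
  have a: "a \<ge> 0" and b: "b \<ge> 0" unfolding a_def b_def by (auto intro!: sum_nonneg sqdist_nonneg)
  have \<kappa>: "2 * \<kappa> \<le> rho_min / 8" "\<kappa> \<ge> 0"
    using lr lip_sq_nonneg zeta_pos by (simp_all add: \<kappa>_def)
  have "2 * \<kappa> * a \<le> rho_min / 8 * a" using \<kappa>(1) a by (rule mult_right_mono)
  moreover have "2 * \<kappa> * e \<le> rho_min / 8 * b"
    using mult_left_mono[OF sum_sqdist_Xhat_X_le, of "2 * \<kappa>" T] mult_right_mono[OF \<kappa>(1) b] \<kappa>(2)
    unfolding b_def e_def by linarith
  moreover have "rho_min * a \<ge> 0" using rho_min_pos a by simp
  moreover have "wsqdist (ctrl_weight z) x0 z \<le> 2 * W" "0 \<le> wsqdist (ctrl_weight z) (Xhat T) z"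
    using wsqdist_ctrl_weight_polX[OF x0_in_polX z] wsqdist_ctrl_weight_polX[OF Xhat_in_polX z]
    by (simp_all add: W_def)
  ultimately have "rho_min * (a + b) \<le> 8 * W"
    using summed_step_bound[OF z regret] unfolding a_def[symmetric] b_def[symmetric] e_def[symmetric]
      \<kappa>_def[symmetric] by (simp add: algebra_simps)
  then have "a + b \<le> 8 * W / rho_min"
    using rho_min_pos by (simp add: pos_le_divide_eq mult.commute)
  then show ?thesis by (simp add: a_def b_def W_def sum.distrib)
qed

lemma exists_small_movement:
  assumes T: "T \<ge> 1" and lr: "2 * \<eta>^2 / \<zeta> * lip_sq \<le> rho_min / 8" and reg: "regret_condition G"
  shows "\<exists>t<T. sqdist G (X (Suc t)) (Xhat t) + sqdist G (Xhat (Suc t)) (X (Suc t))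
    \<le> 8 / \<zeta> * (real n * real (card S)) / rho_min / real T"
proof -
  obtain z where "z \<in> polX G"
    and "0 \<le> (\<Sum>t<T. winprod (ctrl_weight z) (g (Suc t)) (\<lambda>i s a. z i s a - X (Suc t) i s a))"
    using regret_condition_weighted[OF reg, where T=T] by blast
  then show ?thesis using exists_le_average[OF T movement_sum_le[OF lr]] by blast
qed

end

lemma sum_mult_le_sqrt_sum_sq:
  "(\<Sum>k\<in>I. p k * q k) \<le> sqrt (\<Sum>k\<in>I. (p k)^2) * sqrt (\<Sum>k\<in>I. (q k :: real)^2)"
proof -
  have "(\<Sum>k\<in>I. p k * q k) \<le> (\<Sum>k\<in>I. \<bar>p k\<bar> * \<bar>q k\<bar>)"
    by (intro sum_mono) (simp add: abs_mult[symmetric])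
  also have "\<dots> \<le> L2_set p I * L2_set q I" by (rule L2_set_mult_ineq)
  finally show ?thesis by (simp add: L2_set_def)
qed

lemma (in wf_mgame) block_resc_grad_sq_le:
  assumes x: "x \<in> polX G" and i: "i < n" and s: "s \<in> S"
  shows "(\<Sum>a\<in>A i. (resc_grad G c x i s a)^2) \<le> nacts / \<zeta>^4"
proof -
  have "(resc_grad G c x i s a)^2 \<le> (1 / \<zeta>^2)^2" if "a \<in> A i" for a
    using power_mono[OF resc_grad_abs_le[OF x i s that, of c] abs_ge_zero, where n=2] by simp
  then have "(\<Sum>a\<in>A i. (resc_grad G c x i s a)^2) \<le> (\<Sum>a\<in>A i. (1 / \<zeta>^2)^2)"
    by (rule sum_mono)
  also have "\<dots> = real (card (A i)) / \<zeta>^4"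
    by (simp add: power_divide power_mult[symmetric])
  also have "\<dots> \<le> nacts / \<zeta>^4"
    using zeta_pos by (intro divide_right_mono card_A_le i) auto
  finally show ?thesis .
qed

context rogd_run begin

lemma block_gain_Xhat_le:
  assumes mv: "sqdist G (X (Suc t)) (Xhat t) + sqdist G (Xhat (Suc t)) (X (Suc t)) \<le> \<delta>"
    and i: "i < n" and s: "s \<in> S" and z: "\<forall>a\<in>A i. z a \<ge> 0" "(\<Sum>a\<in>A i. z a) = 1"
  shows "(\<Sum>a\<in>A i. g (Suc t) i s a * (z a - Xhat (Suc t) i s a)) \<le> 2 / \<eta> * sqrt \<delta>"
proof -
  let ?u = "Xhat t i s" and ?v = "Xhat (Suc t) i s" and ?g = "g (Suc t) i s"
  have "(\<Sum>a\<in>A i. (?v a - ?u a)^2) \<le> 2 * sqdist G (Xhat (Suc t)) (X (Suc t)) + 2 * sqdist G (X (Suc t)) (Xhat t)"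
    using block_sqdist_le[OF i s, of "Xhat (Suc t)" "Xhat t"] sqdist_triangle by (rule order.trans)
  then have vu: "(\<Sum>a\<in>A i. (?v a - ?u a)^2) \<le> 2 * \<delta>" using mv by linarith
  have "(\<Sum>a\<in>A i. (?u a + \<eta> * ?g a - ?v a) * (z a - ?v a)) =
      \<eta> * (\<Sum>a\<in>A i. ?g a * (z a - ?v a)) - (\<Sum>a\<in>A i. (?v a - ?u a) * (z a - ?v a))"
    by (simp add: sum_distrib_left sum_subtractf[symmetric] algebra_simps)
  moreover have "(\<Sum>a\<in>A i. (?u a + \<eta> * ?g a - ?v a) * (z a - ?v a)) \<le> 0"
    using step_variational_ineq[OF X_in_polX[of "Suc t"] i s z, of "Xhat t" \<eta>]
    unfolding X_Suc(2)[of t, symmetric] .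
  ultimately have "\<eta> * (\<Sum>a\<in>A i. ?g a * (z a - ?v a)) \<le> (\<Sum>a\<in>A i. (?v a - ?u a) * (z a - ?v a))"
    by linarith
  also have "\<dots> \<le> sqrt (\<Sum>a\<in>A i. (?v a - ?u a)^2) * sqrt (\<Sum>a\<in>A i. (z a - ?v a)^2)"
    by (rule sum_mult_le_sqrt_sum_sq)
  also have "\<dots> \<le> sqrt (2 * \<delta>) * sqrt 2"
    using block_sqdist_polX_le_2[OF Xhat_in_polX[of "Suc t"] i s z] vu
      sum_nonneg[of "A i" "\<lambda>a. (?v a - ?u a)^2"]
    by (intro mult_mono real_sqrt_le_mono vu) (auto intro: sum_nonneg)
  also have "\<dots> = sqrt 2 * sqrt 2 * sqrt \<delta>"
    by (simp add: real_sqrt_mult)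
  finally have "\<eta> * (\<Sum>a\<in>A i. ?g a * (z a - ?v a)) \<le> 2 * sqrt \<delta>"
    by simp
  then show ?thesis using eta_pos by (simp add: field_simps mult.commute)
qed

lemma block_gain_X_Xhat_le:
  assumes mv: "sqdist G (X (Suc t)) (Xhat t) + sqdist G (Xhat (Suc t)) (X (Suc t)) \<le> \<delta>"
    and i: "i < n" and s: "s \<in> S"
  shows "(\<Sum>a\<in>A i. g (Suc t) i s a * (Xhat (Suc t) i s a - X (Suc t) i s a)) \<le> sqrt nacts / \<zeta>^2 * sqrt \<delta>"
proof -
  let ?v = "Xhat (Suc t) i s" and ?w = "X (Suc t) i s" and ?g = "g (Suc t) i s"
  have vw: "(\<Sum>a\<in>A i. (?v a - ?w a)^2) \<le> \<delta>"
    using block_sqdist_le[OF i s, of "Xhat (Suc t)" "X (Suc t)"] mv sqdist_nonneg[of "X (Suc t)" "Xhat t"]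
    by linarith
  have "(\<Sum>a\<in>A i. ?g a * (?v a - ?w a)) \<le> sqrt (\<Sum>a\<in>A i. (?g a)^2) * sqrt (\<Sum>a\<in>A i. (?v a - ?w a)^2)"
    by (rule sum_mult_le_sqrt_sum_sq)
  also have "\<dots> \<le> sqrt (nacts / \<zeta>^4) * sqrt \<delta>"
    using nacts_nonneg zeta_pos
    by (intro mult_mono real_sqrt_le_mono block_resc_grad_sq_le[OF X_in_polX i s] vw) (auto intro: sum_nonneg)
  also have "sqrt (nacts / \<zeta>^4) = sqrt nacts / \<zeta>^2"
    using real_sqrt_abs[of "\<zeta>^2"] by (simp add: real_sqrt_divide flip: power_mult)
  finally show ?thesis .
qed

lemma block_deviation_gain_le:
  assumes mv: "sqdist G (X (Suc t)) (Xhat t) + sqdist G (Xhat (Suc t)) (X (Suc t)) \<le> \<delta>"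
    and i: "i < n" and s: "s \<in> S" and z: "\<forall>a\<in>A i. z a \<ge> 0" "(\<Sum>a\<in>A i. z a) = 1"
  shows "(\<Sum>a\<in>A i. g (Suc t) i s a * (z a - X (Suc t) i s a)) \<le> (2 / \<eta> + sqrt nacts / \<zeta>^2) * sqrt \<delta>"
proof -
  have "(\<Sum>a\<in>A i. g (Suc t) i s a * (z a - X (Suc t) i s a)) =
      (\<Sum>a\<in>A i. g (Suc t) i s a * (z a - Xhat (Suc t) i s a)) +
      (\<Sum>a\<in>A i. g (Suc t) i s a * (Xhat (Suc t) i s a - X (Suc t) i s a))"
    by (simp add: sum.distrib[symmetric] algebra_simps)
  then show ?thesis
    using block_gain_Xhat_le[OF mv i s z] block_gain_X_Xhat_le[OF mv i s] by (simp add: distrib_right)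
qed

lemma deviation_gain_le:
  assumes mv: "sqdist G (X (Suc t)) (Xhat t) + sqdist G (Xhat (Suc t)) (X (Suc t)) \<le> \<delta>"
    and i: "i < n" and y: "pol_i G i y"
  shows "Vrho G ((X (Suc t))(i := y)) i - Vrho G (X (Suc t)) i
    \<le> real (card S) / \<zeta> * ((2 / \<eta> + sqrt nacts / \<zeta>^2) * sqrt \<delta>)"
proof -
  define \<Gamma> where "\<Gamma> = (2 / \<eta> + sqrt nacts / \<zeta>^2) * sqrt \<delta>"
  have "\<delta> \<ge> 0"
    using mv sqdist_nonneg[of "X (Suc t)" "Xhat t"] sqdist_nonneg[of "Xhat (Suc t)" "X (Suc t)"] by linarith
  then have \<Gamma>: "\<Gamma> \<ge> 0" unfolding \<Gamma>_def using eta_pos zeta_pos nacts_nonneg by simp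
  have w: "0 \<le> ctrl_weight ((X (Suc t))(i := y)) i s" "ctrl_weight ((X (Suc t))(i := y)) i s \<le> 1 / \<zeta>"
    if "s \<in> S" for s
    using ctrl_weight_bounds[OF polX_upd[OF X_in_polX[of "Suc t"] y i] that, of i] rho_min_pos by auto
  have "Vrho G ((X (Suc t))(i := y)) i - Vrho G (X (Suc t)) i = (\<Sum>s\<in>S. ctrl_weight ((X (Suc t))(i := y)) i s *
      (\<Sum>a\<in>A i. g (Suc t) i s a * (y s a - X (Suc t) i s a)))"
    by (rule deviation_gain_eq[OF X_in_polX y i])
  also have "\<dots> \<le> (\<Sum>s\<in>S. 1 / \<zeta> * \<Gamma>)"
  proof (rule sum_mono)
    fix s assume s: "s \<in> S"
    have "(\<Sum>a\<in>A i. g (Suc t) i s a * (y s a - X (Suc t) i s a)) \<le> \<Gamma>"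
      unfolding \<Gamma>_def by (rule block_deviation_gain_le[OF mv i s]) (use y s in \<open>auto simp: pol_i_def\<close>)
    then show "ctrl_weight ((X (Suc t))(i := y)) i s * (\<Sum>a\<in>A i. g (Suc t) i s a * (y s a - X (Suc t) i s a))
        \<le> 1 / \<zeta> * \<Gamma>"
      using mult_left_mono[OF _ w(1)[OF s]] mult_right_mono[OF w(2)[OF s] \<Gamma>] by (meson order.trans)
  qed
  finally show ?thesis by (simp add: \<Gamma>_def)
qed

lemma is_eps_NE_of_small_movement:
  assumes mv: "sqdist G (X (Suc t)) (Xhat t) + sqdist G (Xhat (Suc t)) (X (Suc t)) \<le> \<delta>"
  shows "is_eps_NE G (real (card S) / \<zeta> * ((2 / \<eta> + sqrt nacts / \<zeta>^2) * sqrt \<delta>)) (X (Suc t))"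
  unfolding is_eps_NE_def
proof (intro conjI X_in_polX allI impI)
  fix i assume i: "i < n"
  have ne: "(\<lambda>y. Vrho G ((X (Suc t))(i := y)) i) ` {y. pol_i G i y} \<noteq> {}"
    using polX_pol_i[OF X_in_polX i] by blast
  have "BRval G (X (Suc t)) i \<le>
      Vrho G (X (Suc t)) i + real (card S) / \<zeta> * ((2 / \<eta> + sqrt nacts / \<zeta>^2) * sqrt \<delta>)"
    unfolding BRval_def
  proof (rule cSup_least[OF ne])
    fix v assume "v \<in> (\<lambda>y. Vrho G ((X (Suc t))(i := y)) i) ` {y. pol_i G i y}"
    then obtain y where "pol_i G i y" and "v = Vrho G ((X (Suc t))(i := y)) i" by blast
    then show "v \<le> Vrho G (X (Suc t)) i + real (card S) / \<zeta> * ((2 / \<eta> + sqrt nacts / \<zeta>^2) * sqrt \<delta>)"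
      using deviation_gain_le[OF mv i] by fastforce
  qed
  then show "BRval G (X (Suc t)) i - Vrho G (X (Suc t)) i \<le>
      real (card S) / \<zeta> * ((2 / \<eta> + sqrt nacts / \<zeta>^2) * sqrt \<delta>)"
    by simp
qed

end

section \<open>Existence of best responses\<close>

context wf_mgame begin

definition det_pol :: "nat \<Rightarrow> ('s \<Rightarrow> 'a) \<Rightarrow> 's \<Rightarrow> 'a \<Rightarrow> real" where
  "det_pol i f = (\<lambda>s a. if s \<in> S \<and> a \<in> A i \<and> f s = a then 1 else 0)"

lemma sum_det_pol_mult:
  assumes i: "i < n" and f: "f \<in> PiE S (\<lambda>_. A i)" and s: "s \<in> S"
  shows "(\<Sum>b\<in>A i. det_pol i f s b * q b) = q (f s)"
proof -
  have "(\<Sum>b\<in>A i. det_pol i f s b * q b) = (\<Sum>b\<in>A i. if b = f s then q b else 0)"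
    by (intro sum.cong refl) (auto simp: det_pol_def s)
  also have "\<dots> = q (f s)" using PiE_mem[OF f s] finite_A[OF i] by (simp add: sum.delta')
  finally show ?thesis .
qed

lemma pol_i_det_pol: "i < n \<Longrightarrow> f \<in> PiE S (\<lambda>_. A i) \<Longrightarrow> pol_i G i (det_pol i f)"
  using sum_det_pol_mult[of i f _ "\<lambda>_. 1"] unfolding pol_i_def by (auto simp: det_pol_def)

lemma Val_det_pol_switch_diff:
  assumes x: "x \<in> polX G" and i: "i < n" and fs: "fs \<in> PiE S (\<lambda>_. A i)"
    and s: "s \<in> S" and b: "b \<in> A i" and s'': "s'' \<in> S"
  defines "xs \<equiv> x(i := det_pol i fs)" and "x' \<equiv> x(i := det_pol i (fs(s := b)))"
  shows "Val G x' i s'' - Val G xs i s'' = N x' s'' s * (Qact G xs i s b - Qact G xs i s (fs s))"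
proof -
  let ?Q = "Qact G xs i"
  have "fs(s := b) \<in> PiE (insert s S) (\<lambda>_. A i)" by (rule PiE_fun_upd[OF b fs])
  then have f': "fs(s := b) \<in> PiE S (\<lambda>_. A i)" using s by (simp add: insert_absorb)
  have xs: "xs \<in> polX G" unfolding xs_def by (rule polX_upd[OF x pol_i_det_pol[OF i fs] i])
  have x': "xs(i := det_pol i (fs(s := b))) = x'" by (simp add: xs_def x'_def)
  have inner: "(\<Sum>b'\<in>A i. (det_pol i (fs(s := b)) s' b' - xs i s' b') * ?Q s' b') =
      (if s' = s then ?Q s b - ?Q s (fs s) else 0)" if s': "s' \<in> S" for s'
    using sum_det_pol_mult[OF i f' s', of "?Q s'"] sum_det_pol_mult[OF i fs s', of "?Q s'"]
    by (simp add: xs_def left_diff_distrib sum_subtractf)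
  have "Val G x' i s'' - Val G xs i s'' =
      (\<Sum>s'\<in>S. N x' s'' s' * (\<Sum>b'\<in>A i. (det_pol i (fs(s := b)) s' b' - xs i s' b') * ?Q s' b'))"
    unfolding x'[symmetric]
    by (rule performance_difference_state[OF row_contraction_Ptrans[OF xs]
          row_contraction_Ptrans[OF polX_upd[OF xs pol_i_det_pol[OF i f'] i]] i s''])
  also have "\<dots> = N x' s'' s * (?Q s b - ?Q s (fs s))"
    using finite_S s by (simp add: inner sum_mult_delta_right cong: sum.cong)
  finally show ?thesis .
qed

text \<open>If it were not, switching state \<open>s\<close> to action \<open>b\<close> would increase the summed values.\<close>

lemma max_det_pol_greedy:
  assumes x: "x \<in> polX G" and i: "i < n" and fs: "fs \<in> PiE S (\<lambda>_. A i)"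
    and max: "\<And>f. f \<in> PiE S (\<lambda>_. A i) \<Longrightarrow>
      (\<Sum>s\<in>S. Val G (x(i := det_pol i f)) i s) \<le> (\<Sum>s\<in>S. Val G (x(i := det_pol i fs)) i s)"
    and s: "s \<in> S" and b: "b \<in> A i"
  shows "Qact G (x(i := det_pol i fs)) i s b \<le> Qact G (x(i := det_pol i fs)) i s (fs s)"
proof (rule ccontr)
  define xs where "xs = x(i := det_pol i fs)"
  define x' where "x' = x(i := det_pol i (fs(s := b)))"
  define gap where "gap = Qact G xs i s b - Qact G xs i s (fs s)"
  assume "\<not> ?thesis"
  then have "gap > 0" by (simp add: gap_def xs_def)
  have "fs(s := b) \<in> PiE (insert s S) (\<lambda>_. A i)" by (rule PiE_fun_upd[OF b fs])
  then have f': "fs(s := b) \<in> PiE S (\<lambda>_. A i)" using s by (simp add: insert_absorb)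
  have x': "x' \<in> polX G" unfolding x'_def by (rule polX_upd[OF x pol_i_det_pol[OF i f'] i])
  have "(\<Sum>s''\<in>S. Val G x' i s'') - (\<Sum>s''\<in>S. Val G xs i s'') = (\<Sum>s''\<in>S. N x' s'' s * gap)"
    using Val_det_pol_switch_diff[OF x i fs s b] unfolding xs_def x'_def gap_def
    by (simp add: sum_subtractf[symmetric])
  moreover have "N x' s s * gap \<le> (\<Sum>s''\<in>S. N x' s'' s * gap)"
    using neumann_Ptrans_nonneg[OF x'] \<open>gap > 0\<close> finite_S s by (intro member_le_sum) auto
  moreover have "N x' s s * gap > 0"
    using row_contraction.neumann_diag_ge_1[OF row_contraction_Ptrans[OF x'] _ s] Ptrans_nonneg[OF x'] \<open>gap > 0\<close>
    by (simp add: less_le_trans[OF zero_less_one])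
  ultimately show False using max[OF f'] unfolding xs_def x'_def by simp
qed

lemma greedy_det_pol_best_response:
  assumes x: "x \<in> polX G" and i: "i < n" and fs: "fs \<in> PiE S (\<lambda>_. A i)"
    and greedy: "\<And>s b. s \<in> S \<Longrightarrow> b \<in> A i \<Longrightarrow>
      Qact G (x(i := det_pol i fs)) i s b \<le> Qact G (x(i := det_pol i fs)) i s (fs s)"
    and y: "pol_i G i y"
  shows "Vrho G (x(i := y)) i \<le> Vrho G (x(i := det_pol i fs)) i"
proof -
  define xs where "xs = x(i := det_pol i fs)"
  define Q where "Q = Qact G xs i"
  have xs: "xs \<in> polX G" unfolding xs_def by (rule polX_upd[OF x pol_i_det_pol[OF i fs] i])
  have inner: "(\<Sum>b\<in>A i. (y s b - xs i s b) * Q s b) \<le> 0" if s: "s \<in> S" for s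
  proof -
    have "(\<Sum>b\<in>A i. y s b * Q s b) \<le> (\<Sum>b\<in>A i. y s b * Q s (fs s))"
      using y s greedy unfolding pol_i_def Q_def xs_def by (intro sum_mono mult_left_mono) auto
    also have "\<dots> = (\<Sum>b\<in>A i. xs i s b * Q s b)"
      using y s sum_det_pol_mult[OF i fs s, of "Q s"]
      unfolding pol_i_def by (simp add: xs_def sum_distrib_right[symmetric])
    finally show ?thesis by (simp add: left_diff_distrib sum_subtractf)
  qed
  have "Vrho G (xs(i := y)) i - Vrho G xs i =
      (\<Sum>s\<in>S. dvis G (xs(i := y)) s * (\<Sum>b\<in>A i. (y s b - xs i s b) * Q s b))"
    unfolding Q_def by (rule performance_difference_polX[OF xs y i])
  also have "\<dots> \<le> 0"
    by (rule sum_nonpos) (simp add: mult_nonneg_nonpos dvis_nonneg[OF polX_upd[OF xs y i]] inner)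
  finally show ?thesis by (simp add: xs_def)
qed

lemma best_response_exists:
  assumes x: "x \<in> polX G" and i: "i < n"
  shows "\<exists>y. pol_i G i y \<and> (\<forall>y'. pol_i G i y' \<longrightarrow> Vrho G (x(i := y')) i \<le> Vrho G (x(i := y)) i)"
proof -
  define D where "D = PiE S (\<lambda>_. A i)"
  define \<Phi> where "\<Phi> f = (\<Sum>s\<in>S. Val G (x(i := det_pol i f)) i s)" for f
  have "finite D" "D \<noteq> {}"
    unfolding D_def using finite_S finite_A[OF i] A_nonempty[OF i]
    by (auto simp: PiE_eq_empty_iff intro!: finite_PiE)
  then have "Max (\<Phi> ` D) \<in> \<Phi> ` D" by (intro Max_in) auto
  then obtain fs where fs: "fs \<in> D" and "Max (\<Phi> ` D) = \<Phi> fs" by blast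
  then have "\<Phi> f \<le> \<Phi> fs" if "f \<in> D" for f
    using \<open>finite D\<close> that by (metis Max_ge finite_imageI imageI)
  then have max: "\<And>f. f \<in> PiE S (\<lambda>_. A i) \<Longrightarrow>
      (\<Sum>s\<in>S. Val G (x(i := det_pol i f)) i s) \<le> (\<Sum>s\<in>S. Val G (x(i := det_pol i fs)) i s)"
    unfolding D_def \<Phi>_def .
  have "Vrho G (x(i := y')) i \<le> Vrho G (x(i := det_pol i fs)) i" if "pol_i G i y'" for y'
    using fs unfolding D_def
    by (intro greedy_det_pol_best_response[OF x i _ max_det_pol_greedy[OF x i _ max] that])
  then show ?thesis using pol_i_det_pol[OF i] fs unfolding D_def by blast
qed

lemma BRset_nonempty:
  assumes x: "x \<in> polX G" and i: "i < n"
  shows "BRset G x i \<noteq> {}"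
proof -
  obtain y where y: "pol_i G i y" and best: "\<And>y'. pol_i G i y' \<Longrightarrow> Vrho G (x(i := y')) i \<le> Vrho G (x(i := y)) i"
    using best_response_exists[OF x i] by blast
  have "BRval G x i = Vrho G (x(i := y)) i"
    unfolding BRval_def by (rule cSup_eq_maximum) (use y best in auto)
  then have "y \<in> BRset G x i" unfolding BRset_def using y by simp
  then show ?thesis by blast
qed

lemma dnorm_bounds:
  assumes z: "z \<in> polX G" and s: "s \<in> S"
  shows "0 \<le> dnorm G z s" "dnorm G z s \<le> 1"
proof -
  have tot: "(\<Sum>s\<in>S. dvis G z s) > 0"
    by (rule sum_pos[OF finite_S S_nonempty]) (rule dvis_pos[OF z])
  show "0 \<le> dnorm G z s" unfolding dnorm_def using dvis_nonneg[OF z s] tot by simp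
  have "dvis G z s \<le> (\<Sum>s\<in>S. dvis G z s)"
    by (rule member_le_sum[OF s]) (use dvis_nonneg[OF z] finite_S in auto)
  then show "dnorm G z s \<le> 1" unfolding dnorm_def using tot by simp
qed

lemma max_dnorm_ratio_bounds:
  assumes z: "z \<in> polX G"
  shows "0 \<le> Max ((\<lambda>s. dnorm G z s / \<rho> s) ` S)" "Max ((\<lambda>s. dnorm G z s / \<rho> s) ` S) \<le> 1 / rho_min"
proof -
  obtain s0 where s0: "s0 \<in> S" using S_nonempty by blast
  have "0 \<le> dnorm G z s0 / \<rho> s0" using dnorm_bounds(1)[OF z s0] rho_pos[OF s0] by simp
  also have "\<dots> \<le> Max ((\<lambda>s. dnorm G z s / \<rho> s) ` S)"
    by (rule Max_ge[OF finite_imageI[OF finite_S] imageI[OF s0]])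
  finally show "0 \<le> Max ((\<lambda>s. dnorm G z s / \<rho> s) ` S)" .
  have "dnorm G z s / \<rho> s \<le> 1 / rho_min" if s: "s \<in> S" for s
  proof -
    have "dnorm G z s / \<rho> s \<le> 1 / \<rho> s"
      using dnorm_bounds(2)[OF z s] rho_pos[OF s] by (simp add: divide_right_mono)
    also have "\<dots> \<le> 1 / rho_min"
      using rho_min_le[OF s] rho_min_pos by (simp add: divide_left_mono)
    finally show ?thesis .
  qed
  then show "Max ((\<lambda>s. dnorm G z s / \<rho> s) ` S) \<le> 1 / rho_min"
    using S_nonempty finite_S by simp
qed

lemma Inf_best_response_ratio_bounds:
  assumes x: "x \<in> polX G" and i: "i < n"
  defines "R \<equiv> {Max ((\<lambda>s. dnorm G (x(i := y)) s / \<rho> s) ` S) | y. y \<in> BRset G x i}"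
  shows "0 \<le> Inf R" "Inf R \<le> 1 / rho_min"
proof -
  have R: "0 \<le> r \<and> r \<le> 1 / rho_min" if "r \<in> R" for r
    using that max_dnorm_ratio_bounds[OF polX_upd[OF x _ i]] unfolding R_def BRset_def by blast
  have "R \<noteq> {}" using BRset_nonempty[OF x i] unfolding R_def by blast
  then obtain r where r: "r \<in> R" by blast
  show "0 \<le> Inf R" using \<open>R \<noteq> {}\<close> R by (intro cInf_greatest) auto
  have "Inf R \<le> r" by (rule cInf_lower[OF r]) (use R in \<open>auto simp: bdd_below_def\<close>)
  then show "Inf R \<le> 1 / rho_min" using R[OF r] by linarith
qed

text \<open>The mismatch coefficient plays no role in the bound; it only has to be nonnegative,
  which needs best responses to exist (an infimum over the empty set is junk).\<close>

lemma mismatch_nonneg: "mismatch G \<ge> 0"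
proof -
  define M where "M = {Inf {Max ((\<lambda>s. dnorm G (x(i := y)) s / \<rho> s) ` S) | y. y \<in> BRset G x i}
                     | i x. i < n \<and> x \<in> polX G}"
  have M: "0 \<le> m \<and> m \<le> 1 / rho_min" if "m \<in> M" for m
    using that Inf_best_response_ratio_bounds unfolding M_def by blast
  have "Inf {Max ((\<lambda>s. dnorm G ((polX_proj (\<lambda>_ _ _. 0))(0 := y)) s / \<rho> s) ` S) | y.
      y \<in> BRset G (polX_proj (\<lambda>_ _ _. 0)) 0} \<in> M"
    unfolding M_def using n_ge_1 polX_proj_in_polX
    by (intro CollectI exI[of _ 0] exI[of _ "polX_proj (\<lambda>_ _ _. 0)"] conjI refl) auto
  then obtain m where m: "m \<in> M" by blast
  have "0 \<le> m" using M[OF m] by simp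
  also have "m \<le> Sup M" by (rule cSup_upper[OF m]) (use M in \<open>auto simp: bdd_above_def\<close>)
  finally show ?thesis unfolding mismatch_def M_def .
qed

end

lemma is_eps_NE_mono: "is_eps_NE G \<epsilon> x \<Longrightarrow> \<epsilon> \<le> \<epsilon>' \<Longrightarrow> is_eps_NE G \<epsilon>' x"
  unfolding is_eps_NE_def by force

context wf_mgame begin

lemma game_size_ge:
  shows "real n \<le> game_size G" "nacts \<le> game_size G" "real (card S) \<le> game_size G"
    "1 / \<zeta> \<le> game_size G" "1 / rho_min \<le> game_size G"
proof -
  have "game_size G = real n + nacts + real (card S) + 1 / \<zeta> + mismatch G + 1 / rho_min"
    unfolding game_size_def nacts_def rho_min_def by simp
  then show "real n \<le> game_size G" "nacts \<le> game_size G" "real (card S) \<le> game_size G"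
    "1 / \<zeta> \<le> game_size G" "1 / rho_min \<le> game_size G"
    using nacts_nonneg zeta_pos rho_min_pos mismatch_nonneg by auto
qed

lemma game_size_ge_1: "1 \<le> game_size G"
  using game_size_ge(1) n_ge_1 by linarith

lemma nacts_ge_1: "1 \<le> nacts"
proof -
  have "card (A 0) \<ge> 1" using finite_A[of 0] A_nonempty[of 0] n_ge_1 by (simp add: Suc_le_eq card_gt_0_iff)
  then show ?thesis using card_A_le[of 0] n_ge_1 by linarith
qed

definition lrate :: real where "lrate = rho_min * \<zeta> / (4 * (lip_sq + 1))"

lemma lrate_pos: "lrate > 0"
  unfolding lrate_def using rho_min_pos zeta_pos lip_sq_nonneg by simp

lemma lrate_small: "2 * lrate^2 / \<zeta> * lip_sq \<le> rho_min / 8"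
proof -
  have "lrate^2 = rho_min^2 * \<zeta>^2 / (16 * (lip_sq + 1)^2)"
    unfolding lrate_def
    by (simp add: power_divide power_mult_distrib) (simp add: power2_eq_square algebra_simps)
  moreover have "lip_sq + 1 \<noteq> 0" "(lip_sq + 1)^2 \<noteq> 0" using lip_sq_nonneg by auto
  ultimately have "2 * lrate^2 / \<zeta> * lip_sq = rho_min / 8 * (rho_min * \<zeta> * lip_sq / (lip_sq + 1)^2)"
    using zeta_pos by (simp add: field_simps power2_eq_square)
  also have "rho_min * \<zeta> * lip_sq / (lip_sq + 1)^2 \<le> 1"
  proof -
    have "rho_min * \<zeta> \<le> 1" using rho_min_le_1 zeta_le_1 rho_min_pos zeta_pos by (simp add: mult_le_one)
    then have "rho_min * \<zeta> * lip_sq \<le> lip_sq" using mult_right_mono[OF _ lip_sq_nonneg] by fastforce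
    also have "lip_sq \<le> (lip_sq + 1)^2" using lip_sq_nonneg by (simp add: power2_eq_square algebra_simps)
    finally show ?thesis using lip_sq_nonneg by simp
  qed
  then have "rho_min / 8 * (rho_min * \<zeta> * lip_sq / (lip_sq + 1)^2) \<le> rho_min / 8"
    by (rule mult_left_le) (use rho_min_pos in simp)
  finally show ?thesis .
qed

lemma lip_sq_le_game_size: "lip_sq \<le> 16 * game_size G ^ 11"
proof -
  note P = game_size_ge
  have "lip_sq = 16 * ((real (card S) * nacts) * (real n * (real (card S) * nacts)) * (1/\<zeta>)^6)"
    unfolding lip_sq_def ncoords_def by (simp add: power_one_over field_simps)
  also have "\<dots> \<le>
      16 * ((game_size G * game_size G) * (game_size G * (game_size G * game_size G)) * game_size G ^ 6)"
    using P zeta_pos nacts_nonneg by (intro mult_left_mono mult_mono power_mono) auto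
  also have "\<dots> = 16 * game_size G ^ 11" by algebra
  finally show ?thesis .
qed

lemma inv_lrate_le_game_size: "1 / lrate \<le> 68 * game_size G ^ 13"
proof -
  note P = game_size_ge
  have "1 / lrate = 4 * (lip_sq + 1) * (1/rho_min) * (1/\<zeta>)"
    unfolding lrate_def using rho_min_pos zeta_pos by (simp add: field_simps)
  also have "\<dots> \<le> 4 * (17 * game_size G ^ 11) * game_size G * game_size G"
  proof -
    have "1 \<le> game_size G ^ 11" using game_size_ge_1 by simp
    then have "lip_sq + 1 \<le> 17 * game_size G ^ 11" using lip_sq_le_game_size by linarith
    then show ?thesis using P lip_sq_nonneg rho_min_pos zeta_pos by (intro mult_mono) auto
  qed
  also have "\<dots> = 68 * game_size G ^ 13" by algebra
  finally show ?thesis .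
qed

lemma sqrt_nacts_div_le_game_size: "sqrt nacts / \<zeta>^2 \<le> game_size G ^ 3"
proof -
  have "sqrt nacts \<le> nacts" using nacts_ge_1 by (simp add: real_sqrt_le_iff' power2_eq_square)
  then have "sqrt nacts \<le> game_size G" using game_size_ge(2) by linarith
  then have "sqrt nacts * (1/\<zeta>)^2 \<le> game_size G * game_size G ^ 2"
    using game_size_ge(4) game_size_ge_1 zeta_pos by (intro mult_mono power_mono) auto
  then show ?thesis by (simp add: power_one_over power3_eq_cube power2_eq_square)
qed

text \<open>\<open>150152 = 137\<^sup>2 \<cdot> 8\<close> with \<open>137 = 2 \<cdot> 68 + 1\<close>.\<close>

lemma eps_constant_le_game_size:
  "(real (card S) / \<zeta> * (2 / lrate + sqrt nacts / \<zeta>^2))^2 * (8 / \<zeta> * (real n * real (card S)) / rho_min)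
    \<le> 150152 * game_size G ^ 34"
proof -
  define P where "P = game_size G"
  note P = game_size_ge[folded P_def] and P1 = game_size_ge_1[folded P_def]
  have "P^3 \<le> P^13" using P1 by (intro power_increasing) auto
  then have \<Gamma>: "2 / lrate + sqrt nacts / \<zeta>^2 \<le> 137 * P^13"
    using inv_lrate_le_game_size sqrt_nacts_div_le_game_size unfolding P_def[symmetric]
    by (simp add: divide_inverse)
  have \<Gamma>_nonneg: "2 / lrate + sqrt nacts / \<zeta>^2 \<ge> 0" using lrate_pos zeta_pos nacts_nonneg by simp
  have "real (card S) / \<zeta> * (2 / lrate + sqrt nacts / \<zeta>^2) =
      real (card S) * (1 / \<zeta>) * (2 / lrate + sqrt nacts / \<zeta>^2)" by simp
  also have "\<dots> \<le> P * P * (137 * P^13)"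
    using P \<Gamma> \<Gamma>_nonneg zeta_pos by (intro mult_mono) auto
  finally have M: "real (card S) / \<zeta> * (2 / lrate + sqrt nacts / \<zeta>^2) \<le> P * P * (137 * P^13)" .
  have "8 / \<zeta> * (real n * real (card S)) / rho_min = 8 * ((1/\<zeta>) * real n * real (card S) * (1/rho_min))"
    by simp
  also have "\<dots> \<le> 8 * (P * P * P * P)"
    using P zeta_pos rho_min_pos by (intro mult_left_mono mult_mono) auto
  finally have B: "8 / \<zeta> * (real n * real (card S)) / rho_min \<le> 8 * P^4"
    by (simp add: power4_eq_xxxx)
  have "(real (card S) / \<zeta> * (2 / lrate + sqrt nacts / \<zeta>^2))^2 * (8 / \<zeta> * (real n * real (card S)) / rho_min)
      \<le> (P * P * (137 * P^13))^2 * (8 * P^4)"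
    using \<Gamma>_nonneg zeta_pos rho_min_pos by (intro mult_mono[OF power_mono[OF M] B]) auto
  also have "\<dots> = 150152 * P^34" by algebra
  finally show ?thesis unfolding P_def .
qed

end

lemma (in rogd_run) exists_eps_NE_iterate:
  assumes reg: "regret_condition G" and lr: "2 * \<eta>^2 / \<zeta> * lip_sq \<le> rho_min / 8" and T: "T \<ge> 1"
  shows "\<exists>t. 1 \<le> t \<and> t \<le> T \<and> is_eps_NE G (real (card S) / \<zeta> * ((2 / \<eta> + sqrt nacts / \<zeta>^2) *
      sqrt (8 / \<zeta> * (real n * real (card S)) / rho_min / real T))) (X t)"
proof -
  obtain t where "t < T" and "sqdist G (X (Suc t)) (Xhat t) + sqdist G (Xhat (Suc t)) (X (Suc t))
      \<le> 8 / \<zeta> * (real n * real (card S)) / rho_min / real T"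
    using exists_small_movement[OF T lr reg] by blast
  then show ?thesis using is_eps_NE_of_small_movement by (intro exI[of _ "Suc t"]) auto
qed

lemma (in single_controller_game) rogd_eps_NE:
  assumes reg: "regret_condition G" and \<epsilon>: "\<epsilon> > 0"
  shows "\<exists>\<eta>>0. \<forall>x0\<in>polX G. \<exists>t::nat. 1 \<le> t \<and> real t \<le> of_int \<lceil>150152 * game_size G ^ 34 / \<epsilon>\<^sup>2\<rceil> \<and>
    is_eps_NE G \<epsilon> (fst (rogd G c \<eta> x0 t))"
proof (intro exI[of _ lrate] conjI ballI lrate_pos)
  fix x0 assume "x0 \<in> polX G"
  then interpret rogd_run G c lrate x0 by unfold_locales (use lrate_pos in auto)
  define K where "K = 150152 * game_size G ^ 34"
  define T where "T = nat \<lceil>K / \<epsilon>^2\<rceil>"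
  have K: "K / \<epsilon>^2 > 0" unfolding K_def using game_size_ge_1 \<epsilon> by simp
  then have T: "T \<ge> 1" "real T \<ge> K / \<epsilon>^2" unfolding T_def by linarith+
  define M where "M = real (card S) / \<zeta> * (2 / lrate + sqrt nacts / \<zeta>^2)"
  define B where "B = 8 / \<zeta> * (real n * real (card S)) / rho_min"
  obtain t where t: "1 \<le> t" "t \<le> T" and NE: "is_eps_NE G (M * sqrt (B / real T)) (X t)"
    using exists_eps_NE_iterate[OF reg lrate_small T(1)] unfolding M_def B_def by (auto simp: mult.assoc)
  have "M * sqrt (B / real T) = sqrt (M^2 * B / real T)"
    unfolding M_def B_def using zeta_pos rho_min_pos lrate_pos nacts_nonneg
    by (simp add: real_sqrt_mult real_sqrt_divide)
  also have "\<dots> \<le> sqrt (\<epsilon>^2)"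
  proof (rule real_sqrt_le_mono)
    have "M^2 * B \<le> K" using eps_constant_le_game_size unfolding M_def B_def K_def .
    also have "K \<le> \<epsilon>^2 * real T" using T(2) \<epsilon> by (simp add: field_simps)
    finally show "M^2 * B / real T \<le> \<epsilon>^2" using T(1) by (simp add: pos_divide_le_eq)
  qed
  finally have "M * sqrt (B / real T) \<le> \<epsilon>" using \<epsilon> by simp
  then show "\<exists>t::nat. 1 \<le> t \<and> real t \<le> of_int \<lceil>K / \<epsilon>\<^sup>2\<rceil> \<and> is_eps_NE G \<epsilon> (fst (rogd G c lrate x0 t))"
    using t NE is_eps_NE_mono K unfolding X_def T_def by (intro exI[of _ t]) auto
qed

theorem theorem3:
  "\<exists>(C::real) (k::nat). C > 0 \<and>
     (\<forall>(G::('s, 'a) mgame) c. wf_game G \<longrightarrow> single_controller G c \<longrightarrow> regret_condition G \<longrightarrow>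
        (\<forall>\<epsilon>>0. \<exists>\<eta>>0. \<forall>x0\<in>polX G.
           \<exists>t::nat. 1 \<le> t \<and> real t \<le> of_int \<lceil>C * game_size G ^ k / \<epsilon>\<^sup>2\<rceil> \<and>
             is_eps_NE G \<epsilon> (fst (rogd G c \<eta> x0 t))))"
proof (rule exI[of _ "150152::real"], rule exI[of _ "34::nat"], intro conjI allI impI)
  fix G :: "('s, 'a) mgame" and c :: nat and \<epsilon> :: real
  assume "wf_game G" "single_controller G c" "regret_condition G" "\<epsilon> > 0"
  then interpret single_controller_game G c by unfold_locales
  show "\<exists>\<eta>>0. \<forall>x0\<in>polX G. \<exists>t::nat. 1 \<le> t \<and> real t \<le> of_int \<lceil>150152 * game_size G ^ 34 / \<epsilon>\<^sup>2\<rceil> \<and>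
      is_eps_NE G \<epsilon> (fst (rogd G c \<eta> x0 t))"
    by (rule rogd_eps_NE) fact+
qed simp

end
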